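(* Let $N\geq 3$, $p>1$, $m\in\mathbb N$ and $\alpha_p:=\max\left\{0,\frac{p(N-2)-(N+2)}{2}\right\}$. For $\alpha>\alpha_p$ let $u_\alpha$ be the unique radial solution of $-\Delta u=|x|^\alpha|u|^{p-1}u$ in $B^N$, $u=0$ on $\partial B^N$, with exactly $m$ nodal sets and $u_\alpha(0)>0$; let $r_{1,\alpha}<\cdots<r_{m,\alpha}=1$ be its zeros in $(0,1]$. Let $v_\alpha(t):=\left(\frac{2}{\alpha+2}\right)^{\frac{2}{p-1}}u_\alpha\left(t^{\frac{2}{\alpha+2}}\right)$, $t\in[0,1]$, and let $t_{1,\alpha}$ be the smallest zero of $v_\alpha$ in $(0,1]$. Then there exist $\delta\in(0,1)$ and $\alpha_0>\alpha_p$ such that $t_{1,\alpha}\geq\delta$ for all $\alpha\geq\alpha_0$. In particular, $r_{i,\alpha}\to1$ as $\alpha\to\infty$ for each $i=1,\dots,m$.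
   Context: $B^N$ is the open unit ball in $\mathbb R^N$ centered at the origin; radial functions are identified with functions of the radius on $[0,1]$. A nodal set is a connected component of the set where the function does not vanish. *)

theory Defs
  imports "HOL-Analysis.Analysis"
begin

definition alpha_p :: "nat \<Rightarrow> real \<Rightarrow> real" where
  "alpha_p N p = max 0 ((p * (real N - 2) - (real N + 2)) / 2)"

text \<open>U (a function of the radius r in [0,1]) is a radial classical solution of
  -Delta u = |x|^alpha |u|^(p-1) u in the unit ball of R^N, u = 0 on the boundary:
  radial form u'' + (N-1)/r u' + r^alpha |u|^(p-1) u = 0 on (0,1), u'(0) = 0, u(1) = 0.\<close>
definition radial_henon_sol :: "nat \<Rightarrow> real \<Rightarrow> real \<Rightarrow> (real \<Rightarrow> real) \<Rightarrow> bool" where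
  "radial_henon_sol N p \<alpha> U \<longleftrightarrow>
     continuous_on {0..1} U \<and> U 1 = 0 \<and>
     (\<exists>U' U''.
        (\<forall>r\<in>{0..<1}. (U has_real_derivative U' r) (at r within {0..<1})) \<and>
        U' 0 = 0 \<and>
        (\<forall>r\<in>{0<..<1}. (U' has_real_derivative U'' r) (at r)) \<and>
        (\<forall>r\<in>{0<..<1}. U'' r + (real N - 1) / r * U' r
                          + r powr \<alpha> * \<bar>U r\<bar> powr (p - 1) * U r = 0))"

text \<open>Number of nodal sets of a radial function U on the unit ball: the connected
  components of the set where it does not vanish, in radial coordinates r in [0,1).\<close>
definition num_nodal_sets :: "(real \<Rightarrow> real) \<Rightarrow> nat" where
  "num_nodal_sets U = card (components {r \<in> {0..<1}. U r \<noteq> 0})"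

definition zeros01 :: "(real \<Rightarrow> real) \<Rightarrow> real set" where
  "zeros01 U = {r \<in> {0<..1}. U r = 0}"

definition ith_zero :: "(real \<Rightarrow> real) \<Rightarrow> nat \<Rightarrow> real" where
  "ith_zero U i = sorted_list_of_set (zeros01 U) ! (i - 1)"

end

theory Submission
  imports Defs "HOL-Real_Asymp.Real_Asymp"
begin

text \<open>The substitution \<open>v(t) = c u(t^(2/(\<alpha>+2)))\<close> turns the Henon equation into
  \<open>v'' + (M-1)/t v' + |v|^(p-1) v = 0\<close> with \<open>M = 2(N+\<alpha>)/(\<alpha>+2)\<close>, which lies in
  \<open>[2,3]\<close> for large \<open>\<alpha>\<close>. Along this equation the energy \<open>E = v'^2/2 + |v|^(p+1)/(p+1)\<close>
  decreases while \<open>t^(2(M-1)) E\<close> increases, and \<open>v \<ge> v(0)/2\<close> as long as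
  \<open>v(0)^(p-1) t^2 \<le> M\<close>. If \<open>v(0)\<close> were large, \<open>E\<close> would be large on \<open>[1/2,1)\<close>; then \<open>v\<close>
  vanishes in every short window there (it is fast below a suitable level, and above that
  level a Pruefer-angle comparison applies), so \<open>v\<close> would have more than \<open>m\<close> zeros and
  \<open>u\<close> more than \<open>m\<close> nodal sets. Hence \<open>v(0)\<close> is bounded uniformly in \<open>\<alpha>\<close>, and the first
  zero of \<open>v\<close>, which is at least \<open>sqrt(M / v(0)^(p-1))\<close>, stays away from \<open>0\<close>. The zeros
  of \<open>u\<close> are the \<open>2/(\<alpha>+2)\<close>-th powers of those of \<open>v\<close> and therefore tend to \<open>1\<close>.\<close>

lemma has_real_derivative_abs_powr:
  fixes r x :: real
  assumes r: "r > 1"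
  shows "((\<lambda>x. \<bar>x\<bar> powr r) has_real_derivative r * \<bar>x\<bar> powr (r - 1) * sgn x) (at x)"
proof (cases "x = 0")
  case True
  have lim: "((\<lambda>h::real. \<bar>h\<bar> powr (r - 1)) \<longlongrightarrow> 0) (at 0)"
    using r by (intro tendsto_zero_powrI) (auto intro!: tendsto_eq_intros)
  have "((\<lambda>h::real. sgn h * \<bar>h\<bar> powr (r - 1)) \<longlongrightarrow> 0) (at 0)"
    by (rule tendsto_0_le[OF lim, of _ 1]) (auto simp: abs_mult sgn_if)
  moreover have "\<forall>\<^sub>F h in at (0::real). sgn h * \<bar>h\<bar> powr (r - 1) = (\<bar>0 + h\<bar> powr r - \<bar>0\<bar> powr r) / h"
    unfolding eventually_at by (rule exI[of _ 1]) (auto simp: powr_diff sgn_if)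
  ultimately have "((\<lambda>h. (\<bar>0 + h\<bar> powr r - \<bar>0\<bar> powr r) / h) \<longlongrightarrow> 0) (at 0)"
    by (rule Lim_transform_eventually)
  then show ?thesis using True by (simp add: DERIV_def)
next
  case False
  then consider "x > 0" | "x < 0" by linarith
  then show ?thesis
  proof cases
    case 1
    have "\<forall>\<^sub>F y in nhds x. \<bar>y\<bar> powr r = y powr r"
      using eventually_nhds_in_open[of "{0<..}" x] 1 by (auto elim!: eventually_mono)
    moreover have "((\<lambda>y. y powr r) has_real_derivative r * x powr (r - 1)) (at x)"
      using 1 by (rule has_real_derivative_powr)
    ultimately show ?thesis using 1 by (subst DERIV_cong_ev[OF refl _ refl]) simp_all
  next
    case 2
    have "\<forall>\<^sub>F y in nhds x. \<bar>y\<bar> powr r = (-y) powr r"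
      using eventually_nhds_in_open[of "{..<0}" x] 2 by (auto elim!: eventually_mono)
    moreover have "((\<lambda>y. (-y) powr r) has_real_derivative r * (-x) powr (r - 1) * (-1)) (at x)"
      using 2 by (auto intro!: derivative_eq_intros)
    ultimately show ?thesis using 2 by (subst DERIV_cong_ev[OF refl _ refl]) simp_all
  qed
qed

lemma abs_powr_diff_one_mult: "\<bar>x::real\<bar> powr (p - 1) * x = \<bar>x\<bar> powr p * sgn x"
  by (cases "x = 0") (auto simp: powr_diff sgn_if)

lemma finite_if_uniformly_separated:
  fixes T :: "'a::metric_space set"
  assumes "compact S" "T \<subseteq> S" "0 < l"
    and sep: "\<And>x y. x \<in> T \<Longrightarrow> y \<in> T \<Longrightarrow> x \<noteq> y \<Longrightarrow> l \<le> dist x y"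
  shows "finite T"
proof (rule ccontr)
  assume "infinite T"
  then obtain x where "x islimpt T"
    using assms(1,2) compact_eq_Bolzano_Weierstrass by blast
  then have inf: "infinite (T \<inter> ball x (l / 2))"
    using \<open>0 < l\<close> by (simp add: islimpt_eq_infinite_ball)
  then obtain y where y: "y \<in> T \<inter> ball x (l / 2)"
    by (metis ex_in_conv finite.emptyI)
  from inf have "infinite (T \<inter> ball x (l / 2) - {y})" by simp
  then obtain z where z: "z \<in> T \<inter> ball x (l / 2)" "z \<noteq> y"
    by (metis Diff_iff ex_in_conv finite.emptyI singletonI)
  have "dist y z < l"
    using y z dist_triangle[of y z x] by (auto simp: dist_commute)
  with sep[of y z] y z show False by auto
qed

text \<open>The angle \<open>arctan (z / sqrt q)\<close> decreases at rate at least \<open>sqrt q\<close> but stays in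
  \<open>(-pi/2, pi/2)\<close>.\<close>

lemma riccati_interval_length:
  fixes z z' :: "real \<Rightarrow> real"
  assumes "a \<le> b" "0 < q"
    and z_deriv: "\<And>t. t \<in> {a..b} \<Longrightarrow> (z has_real_derivative z' t) (at t)"
    and riccati: "\<And>t. t \<in> {a..b} \<Longrightarrow> z' t \<le> - ((z t)\<^sup>2 + q)"
  shows "b - a \<le> pi / sqrt q"
proof (cases "a = b")
  case False
  then have ab: "a < b" using assms(1) by simp
  have q: "q > 0" "sqrt q > 0" using assms(2) by simp_all
  define \<phi> where "\<phi> t = arctan (z t / sqrt q)" for t
  define \<phi>' where "\<phi>' t = (z' t / sqrt q) / (1 + (z t / sqrt q)\<^sup>2)" for t
  have \<phi>_deriv: "(\<phi> has_real_derivative \<phi>' t) (at t)" if "t \<in> {a..b}" for t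
    using DERIV_chain2[OF DERIV_arctan DERIV_cdivide[OF z_deriv[OF that]]]
    unfolding \<phi>_def[abs_def] \<phi>'_def by (simp add: field_simps)
  have \<phi>'_le: "\<phi>' t \<le> - sqrt q" if t: "t \<in> {a..b}" for t
  proof -
    have pos: "q + (z t)\<^sup>2 > 0"
      using q by (simp add: add_pos_nonneg)
    have "1 + (z t / sqrt q)\<^sup>2 = (q + (z t)\<^sup>2) / q"
      using q by (simp add: field_simps power_divide)
    then have "\<phi>' t = z' t * q / (sqrt q * (q + (z t)\<^sup>2))"
      unfolding \<phi>'_def using q by (simp add: field_simps)
    also have "\<dots> \<le> - (q + (z t)\<^sup>2) * q / (sqrt q * (q + (z t)\<^sup>2))"
      using riccati[OF t] q pos by (intro divide_right_mono mult_right_mono) auto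
    also have "\<dots> = - (q / sqrt q)"
    proof -
      have cancel: "- A * x / (y * A) = - (x / y)" if "A > 0" "y \<noteq> 0" for A x y :: real
        using that by (simp add: field_simps)
      show ?thesis
        using pos q by (intro cancel) auto
    qed
    also have "\<dots> = - sqrt q"
      using q by (simp add: real_div_sqrt)
    finally show ?thesis .
  qed
  obtain x where x: "a < x" "x < b" "\<phi> b - \<phi> a = (b - a) * \<phi>' x"
    using MVT2[OF ab, of \<phi> \<phi>'] \<phi>_deriv by force
  have "(b - a) * \<phi>' x \<le> (b - a) * (- sqrt q)"
    using \<phi>'_le[of x] x ab by (intro mult_left_mono) auto
  moreover have "\<phi> b - \<phi> a > - pi"
    unfolding \<phi>_def using arctan_bounded[of "z b / sqrt q"] arctan_bounded[of "z a / sqrt q"] by linarith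
  ultimately have "(b - a) * sqrt q < pi" using x by linarith
  then show ?thesis
    using q by (simp add: pos_le_divide_eq less_imp_le mult.commute)
qed (use assms(2) in \<open>auto intro!: divide_nonneg_nonneg\<close>)

lemma superlevel_extremes:
  fixes f :: "real \<Rightarrow> real"
  assumes "continuous_on {a..b} f" "t \<in> {a..b}" "L \<le> f t"
  obtains t1 t2 where "a \<le> t1" "t1 \<le> t2" "t2 \<le> b" "L \<le> f t1" "L \<le> f t2"
    "\<And>t. t \<in> {a..b} \<Longrightarrow> t < t1 \<or> t2 < t \<Longrightarrow> f t < L"
proof -
  define I where "I = {t \<in> {a..b}. L \<le> f t}"
  have I: "I \<noteq> {}" "bdd_below I" "bdd_above I"
    using assms unfolding I_def by auto
  have "closed I"
    unfolding I_def using assms(1) by (intro continuous_on_closed_Collect_le continuous_on_const) auto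
  have t12: "Inf I \<in> I" "Sup I \<in> I" "Inf I \<le> Sup I"
    using closed_contains_Inf[OF I(1,2) \<open>closed I\<close>] closed_contains_Sup[OF I(1,3) \<open>closed I\<close>]
      cInf_le_cSup[OF I(1,3,2)] by auto
  have outside: "f t < L" if "t \<in> {a..b}" "t < Inf I \<or> Sup I < t" for t
  proof (rule ccontr)
    assume "\<not> f t < L"
    then have "t \<in> I"
      using that unfolding I_def by auto
    then have "Inf I \<le> t" "t \<le> Sup I"
      using I by (auto intro: cInf_lower cSup_upper)
    then show False
      using that by auto
  qed
  have "a \<le> Inf I" "L \<le> f (Inf I)" "Sup I \<le> b" "L \<le> f (Sup I)"
    using t12(1,2) unfolding I_def by auto
  then show ?thesis
    using that[of "Inf I" "Sup I"] t12(3) outside by blast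
qed

section \<open>The Lane-Emden equation \<open>v'' + (M-1)/t v' + |v|^(p-1) v = 0\<close>\<close>

definition amplitude_level :: "real \<Rightarrow> real \<Rightarrow> real" where
  "amplitude_level p e = ((p + 1) * e / 2) powr (1 / (p + 1))"

text \<open>With \<open>L = amplitude_level p e\<close>, i.e. \<open>L^(p+1)/(p+1) = e/2\<close>, a constant-sign arc of a
  solution with energy at least \<open>e\<close> spends at most \<open>L / sqrt e\<close> below the level \<open>L\<close> on either
  side and at most \<open>pi / sqrt (L^(p-1))\<close> above it, so a longer window contains a zero.\<close>

definition window_length :: "real \<Rightarrow> real \<Rightarrow> real" where
  "window_length p e =
     2 * (amplitude_level p e / sqrt e) + pi / sqrt (amplitude_level p e powr (p - 1))"

locale lane_emden =
  fixes V V' V'' :: "real \<Rightarrow> real" and M p :: real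
  assumes p_gt_1: "p > 1" and M_ge_1: "1 \<le> M" and M_le_3: "M \<le> 3"
    and V_deriv: "\<And>t. 0 < t \<Longrightarrow> t < 1 \<Longrightarrow> (V has_real_derivative V' t) (at t)"
    and V'_deriv: "\<And>t. 0 < t \<Longrightarrow> t < 1 \<Longrightarrow> (V' has_real_derivative V'' t) (at t)"
    and ode: "\<And>t. 0 < t \<Longrightarrow> t < 1 \<Longrightarrow> V'' t + (M - 1) / t * V' t + \<bar>V t\<bar> powr (p - 1) * V t = 0"
begin

definition energy :: "real \<Rightarrow> real" where
  "energy t = (V' t)\<^sup>2 / 2 + \<bar>V t\<bar> powr (p + 1) / (p + 1)"

lemma energy_nonneg: "energy t \<ge> 0"
  unfolding energy_def using p_gt_1 by (auto intro!: add_nonneg_nonneg divide_nonneg_pos)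

lemma V'_sq_le_energy: "(V' t)\<^sup>2 \<le> 2 * energy t"
  unfolding energy_def using p_gt_1 by (simp add: divide_nonneg_pos)

lemma has_real_derivative_energy:
  assumes "0 < t" "t < 1"
  shows "(energy has_real_derivative - (M - 1) / t * (V' t)\<^sup>2) (at t)"
proof -
  have "((\<lambda>x. \<bar>x\<bar> powr (p + 1)) has_real_derivative
      (p + 1) * \<bar>V t\<bar> powr (p + 1 - 1) * sgn (V t)) (at (V t))"
    using p_gt_1 by (intro has_real_derivative_abs_powr) simp
  from DERIV_chain2[OF this V_deriv[OF assms]]
  have "((\<lambda>s. \<bar>V s\<bar> powr (p + 1)) has_real_derivative
      (p + 1) * \<bar>V t\<bar> powr p * sgn (V t) * V' t) (at t)"
    by simp
  then have "(energy has_real_derivative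
      2 * V' t * V'' t / 2 + (p + 1) * \<bar>V t\<bar> powr p * sgn (V t) * V' t / (p + 1)) (at t)"
    unfolding energy_def[abs_def]
    by (intro DERIV_add DERIV_cdivide) (auto intro!: derivative_eq_intros V'_deriv[OF assms])
  moreover have "2 * V' t * V'' t / 2 + (p + 1) * \<bar>V t\<bar> powr p * sgn (V t) * V' t / (p + 1)
      = V' t * (V'' t + \<bar>V t\<bar> powr p * sgn (V t))"
    using p_gt_1 by (simp add: field_simps)
  moreover have "V'' t + \<bar>V t\<bar> powr p * sgn (V t) = - ((M - 1) / t * V' t)"
    using ode[OF assms] abs_powr_diff_one_mult[of "V t" p] by linarith
  ultimately have "(energy has_real_derivative V' t * (- ((M - 1) / t * V' t))) (at t)"
    by simp
  then show ?thesis
    by (rule DERIV_cong) (use assms in \<open>simp add: power2_eq_square field_simps\<close>)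
qed

lemma energy_antimono:
  assumes "0 < s" "s \<le> t" "t < 1"
  shows "energy t \<le> energy s"
proof (rule DERIV_nonpos_imp_decreasing_open[OF assms(2)])
  fix x assume "s < x" "x < t"
  then show "\<exists>y. (energy has_real_derivative y) (at x) \<and> y \<le> 0"
    using assms M_ge_1 has_real_derivative_energy[of x]
    by (intro exI[of _ "- (M - 1) / x * (V' x)\<^sup>2"]) (auto intro!: divide_nonpos_pos mult_nonpos_nonneg)
next
  show "continuous_on {s..t} energy"
    using assms has_real_derivative_energy
    by (intro DERIV_continuous_on[where D="\<lambda>x. - (M - 1) / x * (V' x)\<^sup>2"])
      (auto intro: has_field_derivative_at_within)
qed

lemma has_real_derivative_weighted_energy:
  assumes "0 < t" "t < 1"
  shows "((\<lambda>x. x powr (2 * (M - 1)) * energy x) has_real_derivative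
     (M - 1) * t powr (2 * M - 3) * (2 * \<bar>V t\<bar> powr (p + 1) / (p + 1))) (at t)"
proof -
  have "((\<lambda>x. x powr (2 * (M - 1)) * energy x) has_real_derivative
     2 * (M - 1) * t powr (2 * (M - 1) - 1) * energy t
     + t powr (2 * (M - 1)) * (- (M - 1) / t * (V' t)\<^sup>2)) (at t)"
    using DERIV_mult[OF has_real_derivative_powr[OF assms(1), of "2 * (M - 1)"] has_real_derivative_energy[OF assms]]
    by (simp add: ac_simps)
  moreover have "2 * (M - 1) * t powr (2 * (M - 1) - 1) * energy t
      + t powr (2 * (M - 1)) * (- (M - 1) / t * (V' t)\<^sup>2)
    = (M - 1) * t powr (2 * M - 3) * (2 * \<bar>V t\<bar> powr (p + 1) / (p + 1))"
  proof -
    have "t powr (2 * (M - 1)) = t powr (2 * M - 3) * t"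
      using powr_add[of t "2 * M - 3" 1] assms by (simp add: algebra_simps)
    then have "t powr (2 * (M - 1)) * (- (M - 1) / t * (V' t)\<^sup>2)
        = - (M - 1) * t powr (2 * M - 3) * (V' t)\<^sup>2"
      using assms by (simp add: field_simps)
    moreover have "2 * (M - 1) - 1 = 2 * M - 3"
      by simp
    ultimately show ?thesis
      unfolding energy_def by (simp add: algebra_simps)
  qed
  ultimately show ?thesis
    by simp
qed

lemma weighted_energy_mono:
  assumes "0 < s" "s \<le> t" "t < 1"
  shows "s powr (2 * (M - 1)) * energy s \<le> t powr (2 * (M - 1)) * energy t"
proof (rule DERIV_nonneg_imp_increasing_open[OF assms(2)])
  fix x assume "s < x" "x < t"
  then show "\<exists>y. ((\<lambda>x. x powr (2 * (M - 1)) * energy x) has_real_derivative y) (at x) \<and> 0 \<le> y"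
    using assms M_ge_1 p_gt_1 has_real_derivative_weighted_energy[of x]
    by (intro exI[of _ "(M - 1) * x powr (2 * M - 3) * (2 * \<bar>V x\<bar> powr (p + 1) / (p + 1))"])
      (auto intro!: mult_nonneg_nonneg divide_nonneg_pos)
next
  show "continuous_on {s..t} (\<lambda>x. x powr (2 * (M - 1)) * energy x)"
    using assms has_real_derivative_weighted_energy
    by (intro DERIV_continuous_on[where
          D="\<lambda>x. (M - 1) * x powr (2 * M - 3) * (2 * \<bar>V x\<bar> powr (p + 1) / (p + 1))"])
      (auto intro: has_field_derivative_at_within)
qed

lemma energy_lower_bound:
  assumes "0 < s" "s \<le> t" "t < 1"
  shows "s powr (2 * (M - 1)) * energy s \<le> energy t"
proof -
  have "t powr (2 * (M - 1)) \<le> 1"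
    using assms M_ge_1 by (intro powr_le1) auto
  then have "t powr (2 * (M - 1)) * energy t \<le> energy t"
    using energy_nonneg[of t] by (simp add: mult_left_le_one_le)
  then show ?thesis using weighted_energy_mono[OF assms] by linarith
qed

lemma V_continuous_on: "0 < a \<Longrightarrow> b < 1 \<Longrightarrow> continuous_on {a..b} V"
  by (intro continuous_at_imp_continuous_on ballI DERIV_isCont[OF V_deriv]) auto

lemma V_mvt:
  assumes "0 < a" "a < b" "b < 1"
  obtains z where "a < z" "z < b" "V b - V a = (b - a) * V' z"
  using MVT2[OF assms(2), of V V'] V_deriv assms by force

lemma length_below_level:
  assumes "0 < a" "a \<le> b" "b < 1" "\<forall>t\<in>{a..b}. 0 < V t \<and> V t \<le> L"
    and "\<forall>t\<in>{a..b}. e \<le> energy t" "0 < e" "L powr (p + 1) / (p + 1) \<le> e / 2"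
  shows "b - a \<le> L / sqrt e"
proof (cases "a = b")
  case False
  then have ab: "a < b" using assms by simp
  obtain z where z: "a < z" "z < b" "V b - V a = (b - a) * V' z"
    using V_mvt[OF assms(1) ab assms(3)] .
  have "0 < V z" "V z \<le> L"
    using assms(4) z by auto
  then have "\<bar>V z\<bar> powr (p + 1) / (p + 1) \<le> L powr (p + 1) / (p + 1)"
    using p_gt_1 by (intro divide_right_mono powr_mono2) auto
  moreover have "e \<le> energy z" using assms z by auto
  ultimately have "e \<le> (V' z)\<^sup>2" using assms(7) unfolding energy_def by linarith
  then have "sqrt e \<le> \<bar>V' z\<bar>" using real_sqrt_le_mono[of e "(V' z)\<^sup>2"] by simp
  then have "(b - a) * sqrt e \<le> (b - a) * \<bar>V' z\<bar>" using ab by (intro mult_left_mono) auto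
  also have "\<dots> = \<bar>V b - V a\<bar>" using z ab by (simp add: abs_mult)
  also have "\<dots> \<le> L"
    using assms(4) ab by (smt (verit) atLeastAtMost_iff)
  finally show ?thesis using assms by (simp add: le_divide_eq)
qed (use assms in simp)

lemma length_above_level:
  assumes "0 < a" "a \<le> b" "b < 1" "\<forall>t\<in>{a..b}. L \<le> V t" "0 < L"
  shows "b - a \<le> pi / sqrt (L powr (p - 1))"
proof (rule riccati_interval_length[where z="\<lambda>t. V' t / V t + (M - 1) / (2 * t)"
      and z'="\<lambda>t. V'' t / V t - (V' t / V t)\<^sup>2 - (M - 1) / (2 * t\<^sup>2)", OF assms(2)])
  show "0 < L powr (p - 1)"
    using assms(5) by simp
  fix t assume t: "t \<in> {a..b}"
  then have t0: "0 < t" "t < 1" and Vt: "V t > 0"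
    using assms by force+
  show "((\<lambda>t. V' t / V t + (M - 1) / (2 * t)) has_real_derivative
      V'' t / V t - (V' t / V t)\<^sup>2 - (M - 1) / (2 * t\<^sup>2)) (at t)"
    using t0 Vt by (auto intro!: derivative_eq_intros V'_deriv V_deriv simp: field_simps power2_eq_square)
  have riccati_identity: "(- (m / t * w) - P - w\<^sup>2 - m / (2 * t\<^sup>2)) + (w + m / (2 * t))\<^sup>2
      = - P + m * (m - 2) / (4 * t\<^sup>2)" for m w P :: real
    using t0 by (simp add: field_simps power2_eq_square)
  have "V'' t = - ((M - 1) / t * V' t) - V t powr (p - 1) * V t"
    using ode[OF t0] Vt by simp
  then have V''_div: "V'' t / V t = - ((M - 1) / t * (V' t / V t)) - V t powr (p - 1)"
    using Vt by (simp add: diff_divide_distrib)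
  have "V'' t / V t - (V' t / V t)\<^sup>2 - (M - 1) / (2 * t\<^sup>2) + (V' t / V t + (M - 1) / (2 * t))\<^sup>2
      = - (V t powr (p - 1)) + (M - 1) * ((M - 1) - 2) / (4 * t\<^sup>2)"
    unfolding V''_div by (rule riccati_identity)
  moreover have "(M - 1) * ((M - 1) - 2) / (4 * t\<^sup>2) \<le> 0"
    using M_ge_1 M_le_3 t0 by (intro divide_nonpos_pos mult_nonneg_nonpos) auto
  moreover have "L powr (p - 1) \<le> V t powr (p - 1)"
    using assms t p_gt_1 by (intro powr_mono2) auto
  ultimately show "V'' t / V t - (V' t / V t)\<^sup>2 - (M - 1) / (2 * t\<^sup>2)
      \<le> - ((V' t / V t + (M - 1) / (2 * t))\<^sup>2 + L powr (p - 1))"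
    by linarith
qed

lemma flux_strict_antimono:
  assumes "0 < x" "x < y" "y < 1" "\<forall>t\<in>{x..y}. V t > 0"
  shows "y powr (M - 1) * V' y < x powr (M - 1) * V' x"
proof (rule DERIV_neg_imp_decreasing[OF assms(2), where f="\<lambda>t. t powr (M - 1) * V' t"])
  fix t assume t: "x \<le> t" "t \<le> y"
  then have t0: "0 < t" "t < 1" using assms by auto
  have D: "((\<lambda>t. t powr (M - 1) * V' t) has_real_derivative
      (M - 1) * t powr (M - 1 - 1) * V' t + t powr (M - 1) * V'' t) (at t)"
    using DERIV_mult[OF has_real_derivative_powr[OF t0(1), of "M - 1"] V'_deriv[OF t0]]
    by (simp add: ac_simps)
  have "(M - 1) * t powr (M - 1 - 1) * V' t + t powr (M - 1) * V'' t
      = t powr (M - 1) * (V'' t + (M - 1) / t * V' t)"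
    using t0 by (simp add: powr_diff field_simps power2_eq_square)
  also have "\<dots> = - (t powr (M - 1) * (\<bar>V t\<bar> powr (p - 1) * V t))"
  proof -
    have "V'' t + (M - 1) / t * V' t = - (\<bar>V t\<bar> powr (p - 1) * V t)"
      using ode[OF t0] by linarith
    then show ?thesis by simp
  qed
  also have "\<dots> < 0"
  proof -
    have "V t > 0" using assms t by auto
    then show ?thesis using t0 by simp
  qed
  finally show "\<exists>D. ((\<lambda>t. t powr (M - 1) * V' t) has_real_derivative D) (at t) \<and> D < 0"
    using D by blast
qed

lemma positive_arc_quasiconcave:
  assumes "0 < t1" "t1 \<le> s" "s \<le> t2" "t2 < 1" "\<forall>t\<in>{t1..t2}. V t > 0"
    and "L \<le> V t1" "L \<le> V t2"
  shows "L \<le> V s"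
proof (rule ccontr)
  assume "\<not> L \<le> V s"
  then have Vs: "V s < L" by simp
  have s: "t1 < s" "s < t2"
    using assms Vs by (auto simp: le_less)
  obtain x where x: "t1 < x" "x < s" "V s - V t1 = (s - t1) * V' x"
    using V_mvt[OF assms(1) s(1)] s assms by auto
  obtain y where y: "s < y" "y < t2" "V t2 - V s = (t2 - s) * V' y"
    using V_mvt[of s t2] s assms by auto
  have "(s - t1) * V' x < 0" using x Vs assms by linarith
  then have "V' x < 0" using s by (simp add: mult_less_0_iff)
  have "(t2 - s) * V' y > 0" using y Vs assms by linarith
  then have "V' y > 0" using s by (simp add: zero_less_mult_iff)
  have "y powr (M - 1) * V' y < x powr (M - 1) * V' x"
    using assms x y by (intro flux_strict_antimono) auto
  moreover have "x powr (M - 1) * V' x < 0" using \<open>V' x < 0\<close> x assms by (simp add: mult_pos_neg)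
  moreover have "y powr (M - 1) * V' y > 0" using \<open>V' y > 0\<close> y assms by simp
  ultimately show False by linarith
qed

lemma positive_arc_length:
  assumes "0 < a" "a \<le> b" "b < 1" "\<forall>t\<in>{a..b}. 0 < V t" "\<forall>t\<in>{a..b}. e \<le> energy t"
    and "0 < e" "0 < L" "L powr (p + 1) / (p + 1) \<le> e / 2"
  shows "b - a \<le> 2 * (L / sqrt e) + pi / sqrt (L powr (p - 1))"
proof -
  define K where "K = L / sqrt e"
  have K: "0 \<le> K" "0 \<le> pi / sqrt (L powr (p - 1))"
    using assms by (simp_all add: K_def)
  have below: "d - c \<le> K" if "a \<le> c" "c \<le> d" "d \<le> b" "\<forall>t\<in>{c..d}. V t \<le> L" for c d
    unfolding K_def using that assms by (intro length_below_level) auto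
  show ?thesis
  proof (cases "\<forall>t\<in>{a..b}. V t < L")
    case True
    then have "b - a \<le> K"
      using assms by (intro below) auto
    then show ?thesis
      using K unfolding K_def by linarith
  next
    case False
    then obtain t where "t \<in> {a..b}" "L \<le> V t"
      by (auto simp: not_less)
    then obtain t1 t2 where t12: "a \<le> t1" "t1 \<le> t2" "t2 \<le> b" "L \<le> V t1" "L \<le> V t2"
      and outside: "\<And>t. t \<in> {a..b} \<Longrightarrow> t < t1 \<or> t2 < t \<Longrightarrow> V t < L"
      using superlevel_extremes[OF V_continuous_on[OF assms(1,3)]] by blast
    have "t1 \<le> a + K"
    proof (cases "a < t1")
      case True
      show ?thesis
      proof (rule dense_le_bounded[OF True])
        fix w assume w: "a < w" "w < t1"
        have "V t \<le> L" if "t \<in> {a..w}" for t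
          using outside[of t] that w t12 by force
        then have "w - a \<le> K"
          using w t12 by (intro below) auto
        then show "w \<le> a + K" by simp
      qed
    qed (use K in simp)
    moreover have "b - K \<le> t2"
    proof (cases "t2 < b")
      case True
      show ?thesis
      proof (rule dense_ge_bounded[OF True])
        fix w assume w: "t2 < w" "w < b"
        have "V t \<le> L" if "t \<in> {w..b}" for t
          using outside[of t] that w t12 by force
        then have "b - w \<le> K"
          using w t12 by (intro below) auto
        then show "b - K \<le> w" by simp
      qed
    qed (use K in simp)
    moreover have "t2 - t1 \<le> pi / sqrt (L powr (p - 1))"
    proof (rule length_above_level)
      show "\<forall>t\<in>{t1..t2}. L \<le> V t"
      proof
        fix t assume "t \<in> {t1..t2}"
        then show "L \<le> V t"
          using t12 assms by (intro positive_arc_quasiconcave[of t1 t t2]) auto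
      qed
    qed (use t12 assms in auto)
    ultimately show ?thesis
      unfolding K_def by linarith
  qed
qed

lemma negative_arc_length:
  assumes "0 < a" "a \<le> b" "b < 1" "\<forall>t\<in>{a..b}. V t < 0" "\<forall>t\<in>{a..b}. e \<le> energy t"
    and "0 < e" "0 < L" "L powr (p + 1) / (p + 1) \<le> e / 2"
  shows "b - a \<le> 2 * (L / sqrt e) + pi / sqrt (L powr (p - 1))"
proof -
  interpret neg: lane_emden "\<lambda>t. - V t" "\<lambda>t. - V' t" "\<lambda>t. - V'' t" M p
  proof
    show "((\<lambda>t. - V t) has_real_derivative - V' t) (at t)" if "0 < t" "t < 1" for t
      using V_deriv[OF that] by (rule DERIV_minus)
    show "((\<lambda>t. - V' t) has_real_derivative - V'' t) (at t)" if "0 < t" "t < 1" for t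
      using V'_deriv[OF that] by (rule DERIV_minus)
    show "- V'' t + (M - 1) / t * - V' t + \<bar>- V t\<bar> powr (p - 1) * - V t = 0" if "0 < t" "t < 1" for t
      using ode[OF that] by simp
  qed (use p_gt_1 M_ge_1 M_le_3 in auto)
  have "neg.energy t = energy t" for t
    unfolding neg.energy_def energy_def by simp
  then show ?thesis
    using assms by (intro neg.positive_arc_length) auto
qed

lemma window_length_nonneg: "0 \<le> e \<Longrightarrow> 0 \<le> window_length p e"
  unfolding window_length_def amplitude_level_def by (intro add_nonneg_nonneg mult_nonneg_nonneg divide_nonneg_nonneg) auto

lemma zero_in_long_window:
  assumes "0 < a" "b < 1" "0 < e" "\<forall>t\<in>{a..b}. e \<le> energy t" "window_length p e < b - a"
  shows "\<exists>z\<in>{a..b}. V z = 0"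
proof (rule ccontr)
  assume no_zero: "\<not> (\<exists>z\<in>{a..b}. V z = 0)"
  define L where "L = amplitude_level p e"
  have "L powr (p + 1) = (p + 1) * e / 2"
    unfolding L_def amplitude_level_def using p_gt_1 assms(3) by (simp add: powr_powr)
  then have L: "0 < L" "L powr (p + 1) / (p + 1) \<le> e / 2"
    unfolding L_def amplitude_level_def using p_gt_1 assms(3) by auto
  have ab: "a \<le> b"
    using assms(3,5) window_length_nonneg[of e] by linarith
  have cont: "continuous_on {a..t} V" if "t \<in> {a..b}" for t
    using that assms by (intro V_continuous_on) auto
  have "b - a \<le> window_length p e"
  proof (cases "V a > 0")
    case True
    have "0 < V t" if t: "t \<in> {a..b}" for t
    proof (rule ccontr)
      assume "\<not> 0 < V t"
      then obtain x where "a \<le> x" "x \<le> t" "V x = 0"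
        using IVT2'[of V t 0 a] True t cont[OF t] by force
      then show False using no_zero t by auto
    qed
    then show ?thesis
      using positive_arc_length[OF assms(1) ab assms(2) _ assms(4,3) L] unfolding window_length_def L_def by blast
  next
    case False
    then have Va: "V a < 0"
      using no_zero ab by (metis atLeastAtMost_iff linorder_neqE_linordered_idom order_refl)
    have "V t < 0" if t: "t \<in> {a..b}" for t
    proof (rule ccontr)
      assume "\<not> V t < 0"
      then obtain x where "a \<le> x" "x \<le> t" "V x = 0"
        using IVT'[of V a 0 t] Va t cont[OF t] by force
      then show False using no_zero t by auto
    qed
    then show ?thesis
      using negative_arc_length[OF assms(1) ab assms(2) _ assms(4,3) L] unfolding window_length_def L_def by blast
  qed
  with assms(5) show False by linarith
qed

lemma zeros_in_windows:
  assumes "0 < a" "0 < e" "\<forall>t\<in>{a..<1}. e \<le> energy t"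
    and "(2 * real m + 1) * window_length p e < 1 - a"
  obtains Z where "Z \<subseteq> {a..<1}" "card Z = m" "\<forall>z\<in>Z. V z = 0"
proof -
  define w where "w = (1 - a) / (2 * real m + 1)"
  have "0 \<le> (2 * real m + 1) * window_length p e"
    using window_length_nonneg assms(2) by simp
  then have w: "window_length p e < w" "0 < w"
    using assms(4) by (simp_all add: w_def field_simps)
  define lo where "lo i = a + 2 * real i * w" for i :: nat
  have lo: "a \<le> lo i" for i
    unfolding lo_def using w by simp
  have top: "lo i + w < 1" if "i < m" for i
  proof -
    have "lo i + w = a + (2 * real i + 1) * w"
      unfolding lo_def by (simp add: algebra_simps)
    also have "\<dots> < a + (2 * real m + 1) * w"
      using that w by (intro add_strict_left_mono mult_strict_right_mono) auto
    also have "\<dots> = 1"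
      unfolding w_def by simp
    finally show ?thesis .
  qed
  have "\<forall>i\<in>{..<m}. \<exists>z. z \<in> {lo i..lo i + w} \<and> V z = 0"
  proof
    fix i assume "i \<in> {..<m}"
    then show "\<exists>z. z \<in> {lo i..lo i + w} \<and> V z = 0"
      using zero_in_long_window[of "lo i" "lo i + w" e] assms(1-3) w lo[of i] top[of i] by force
  qed
  then obtain z where z: "\<forall>i\<in>{..<m}. z i \<in> {lo i..lo i + w} \<and> V (z i) = 0"
    by (rule bchoice[THEN exE])
  have "strict_mono_on {..<m} z"
  proof (rule strict_mono_onI)
    fix i j assume ij: "i \<in> {..<m}" "j \<in> {..<m}" "i < j"
    then have "(2 * real i + 1) * w < (2 * real j) * w"
      using w by (intro mult_strict_right_mono) auto
    then have "lo i + w < lo j"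
      unfolding lo_def by (simp add: algebra_simps)
    moreover have "z i \<le> lo i + w" "lo j \<le> z j"
      using z ij by auto
    ultimately show "z i < z j"
      by linarith
  qed
  then have "card (z ` {..<m}) = m"
    by (simp add: card_image strict_mono_on_imp_inj_on)
  moreover have "z ` {..<m} \<subseteq> {a..<1}"
  proof
    fix y assume "y \<in> z ` {..<m}"
    then obtain i where i: "i < m" "y = z i" by auto
    then have "lo i \<le> z i" "z i \<le> lo i + w"
      using z by auto
    then show "y \<in> {a..<1}"
      using i lo[of i] top[of i] by auto
  qed
  ultimately show ?thesis
    using that z by blast
qed

lemma zero_gap:
  assumes "0 < z" "z < z'" "z' \<le> 1" "V z = 0" "V z' = 0" "continuous_on {z..z'} V"
    and "\<forall>t\<in>{z..<z'}. e \<le> energy t \<and> energy t \<le> E1" "0 < e"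
  shows "((p + 1) * e) powr (1 / (p + 1)) \<le> (z' - z) * sqrt (2 * E1)"
proof -
  have "\<exists>c. z < c \<and> c < z' \<and> (*) (V' c) = (\<lambda>v. 0)"
  proof (rule Rolle_deriv[OF assms(2) _ assms(6)])
    fix x assume "z < x" "x < z'"
    then show "(V has_derivative (*) (V' x)) (at x)"
      using V_deriv[of x] assms by (simp add: has_field_derivative_def)
  qed (use assms in simp)
  then obtain c where c: "z < c" "c < z'" "V' c = 0"
    by (metis mult_cancel_left1)
  obtain \<xi> where \<xi>: "z < \<xi>" "\<xi> < c" "V c - V z = (c - z) * V' \<xi>"
    using V_mvt[OF assms(1) c(1)] c assms by auto
  have "e \<le> energy c"
    using assms(7) c by auto
  then have "(p + 1) * e \<le> \<bar>V c\<bar> powr (p + 1)"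
    unfolding energy_def using c p_gt_1 by (simp add: field_simps)
  then have "((p + 1) * e) powr (1 / (p + 1)) \<le> (\<bar>V c\<bar> powr (p + 1)) powr (1 / (p + 1))"
    using p_gt_1 assms by (intro powr_mono2) auto
  also have "\<dots> = \<bar>V c\<bar>"
    using p_gt_1 by (simp add: powr_powr)
  also have "\<dots> = (c - z) * \<bar>V' \<xi>\<bar>"
    using \<xi> c assms(4) by (simp add: abs_mult)
  also have "\<dots> \<le> (z' - z) * sqrt (2 * E1)"
  proof (rule mult_mono)
    have "energy \<xi> \<le> E1"
      using assms(7) \<xi> c by auto
    then have "(V' \<xi>)\<^sup>2 \<le> 2 * E1"
      using V'_sq_le_energy[of \<xi>] by linarith
    then show "\<bar>V' \<xi>\<bar> \<le> sqrt (2 * E1)"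
      using real_sqrt_le_mono by fastforce
  qed (use c in auto)
  finally show ?thesis .
qed

end

text \<open>The lower bound for the energy beyond the plateau: the potential energy
  \<open>(V 0 / 2)^(p+1)/(p+1)\<close> at \<open>plateau_end\<close> times the weight
  \<open>plateau_end^(2(M-1)) \<ge> V(0)^(-(p-1)(Ms-1))\<close>, valid when \<open>V 0 \<ge> 1\<close> and \<open>M \<le> Ms\<close>.\<close>

definition energy_floor :: "real \<Rightarrow> real \<Rightarrow> real \<Rightarrow> real" where
  "energy_floor p Ms \<gamma> = (\<gamma> / 2) powr (p + 1) / (p + 1) * \<gamma> powr (- (p - 1) * (Ms - 1))"

locale lane_emden_solution = lane_emden +
  assumes V_continuous: "continuous_on {0..1} V" and V_1: "V 1 = 0" and V_0: "V 0 > 0"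
    and plateau: "\<And>t. 0 \<le> t \<Longrightarrow> t < 1 \<Longrightarrow> V 0 powr (p - 1) * t\<^sup>2 \<le> M \<Longrightarrow> V 0 / 2 \<le> V t"
begin

definition plateau_end :: real where
  "plateau_end = sqrt (M / V 0 powr (p - 1))"

lemma plateau_end_pos: "plateau_end > 0"
  unfolding plateau_end_def using V_0 M_ge_1 by simp

lemma plateau_end_sq: "plateau_end\<^sup>2 = M / V 0 powr (p - 1)"
  unfolding plateau_end_def using V_0 M_ge_1 by simp

lemma zeros01_ge_plateau_end:
  assumes "t \<in> zeros01 V"
  shows "t = 1 \<or> plateau_end \<le> t"
proof (rule ccontr)
  assume "\<not> (t = 1 \<or> plateau_end \<le> t)"
  then have t: "0 < t" "t < 1" "t < plateau_end" "V t = 0"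
    using assms unfolding zeros01_def by auto
  have "V 0 powr (p - 1) * t\<^sup>2 \<le> V 0 powr (p - 1) * plateau_end\<^sup>2"
    using t by (intro mult_left_mono power_mono) auto
  then have "V 0 / 2 \<le> V t"
    using plateau_end_sq t V_0 by (intro plateau) auto
  then show False
    using t V_0 by simp
qed

lemma energy_at_plateau_end:
  assumes "plateau_end < 1"
  shows "(V 0 / 2) powr (p + 1) / (p + 1) \<le> energy plateau_end"
proof -
  have "V 0 / 2 \<le> V plateau_end"
    using plateau_end_sq plateau_end_pos assms V_0 by (intro plateau) auto
  then have "(V 0 / 2) powr (p + 1) / (p + 1) \<le> \<bar>V plateau_end\<bar> powr (p + 1) / (p + 1)"
    using V_0 p_gt_1 by (intro divide_right_mono powr_mono2) auto
  also have "\<dots> \<le> energy plateau_end"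
    unfolding energy_def by simp
  finally show ?thesis .
qed

text \<open>Between consecutive zeros beyond the plateau the energy is pinched between
  \<open>plateau_end^(2(M-1)) E(plateau_end)\<close> and \<open>E(plateau_end)\<close>, so \<open>zero_gap\<close> separates them
  uniformly; zeros cannot accumulate, not even at \<open>1\<close>.\<close>

lemma finite_zeros01: "finite (zeros01 V)"
proof (cases "plateau_end < 1")
  case False
  then have "zeros01 V \<subseteq> {1}"
    using zeros01_ge_plateau_end unfolding zeros01_def by fastforce
  then show ?thesis
    by (rule finite_subset) simp
next
  case True
  define s where "s = plateau_end"
  define e where "e = s powr (2 * (M - 1)) * energy s"
  have Es: "energy s > 0"
    using energy_at_plateau_end[OF True] V_0 p_gt_1 unfolding s_def
    by (smt (verit) divide_pos_pos powr_gt_zero)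
  have e: "e > 0"
    unfolding e_def using Es plateau_end_pos s_def by simp
  define l where "l = ((p + 1) * e) powr (1 / (p + 1)) / sqrt (2 * energy s)"
  have l: "l > 0"
    unfolding l_def using e p_gt_1 Es by simp
  have sub: "zeros01 V \<subseteq> {s..1}"
    using zeros01_ge_plateau_end True unfolding zeros01_def s_def by fastforce
  have gap: "l \<le> y - x" if xy: "x \<in> zeros01 V" "y \<in> zeros01 V" "x < y" for x y
  proof -
    have bounds: "\<forall>t\<in>{x..<y}. e \<le> energy t \<and> energy t \<le> energy s"
    proof
      fix t assume "t \<in> {x..<y}"
      then have t: "s \<le> t" "t < 1"
        using xy sub unfolding zeros01_def by auto
      show "e \<le> energy t \<and> energy t \<le> energy s"
        unfolding e_def s_def
        using energy_lower_bound[OF plateau_end_pos] energy_antimono[OF plateau_end_pos] t s_def by simp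
    qed
    have "((p + 1) * e) powr (1 / (p + 1)) \<le> (y - x) * sqrt (2 * energy s)"
      using xy sub plateau_end_pos e bounds unfolding zeros01_def s_def
      by (intro zero_gap continuous_on_subset[OF V_continuous]) auto
    then show ?thesis
      unfolding l_def using Es by (simp add: divide_le_eq)
  qed
  show ?thesis
  proof (rule finite_if_uniformly_separated[OF compact_Icc sub l])
    fix x y assume "x \<in> zeros01 V" "y \<in> zeros01 V" "x \<noteq> y"
    then show "l \<le> dist x y"
      using gap[of x y] gap[of y x] by (cases "x < y") (auto simp: dist_real_def)
  qed
qed

lemma energy_floor_le_energy:
  assumes "1 \<le> V 0" "M \<le> Ms" "plateau_end \<le> t" "t < 1"
  shows "energy_floor p Ms (V 0) \<le> energy t"
proof -
  have "plateau_end powr (2 * (M - 1)) = (plateau_end powr 2) powr (M - 1)"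
    by (simp only: powr_powr)
  also have "\<dots> = (M / V 0 powr (p - 1)) powr (M - 1)"
    using plateau_end_pos plateau_end_sq by simp
  finally have weight: "plateau_end powr (2 * (M - 1)) = (M / V 0 powr (p - 1)) powr (M - 1)" .
  have "V 0 powr (- (p - 1) * (Ms - 1)) \<le> V 0 powr (- (p - 1) * (M - 1))"
    using assms(1,2) p_gt_1 by (intro powr_mono) (auto simp: mult_left_mono)
  also have "\<dots> = (V 0 powr (- (p - 1))) powr (M - 1)"
    by (simp only: powr_powr)
  also have "\<dots> = (1 / V 0 powr (p - 1)) powr (M - 1)"
    by (simp only: powr_minus_divide)
  also have "\<dots> \<le> plateau_end powr (2 * (M - 1))"
    unfolding weight using M_ge_1 V_0 by (intro powr_mono2 divide_right_mono) auto
  finally have "V 0 powr (- (p - 1) * (Ms - 1)) \<le> plateau_end powr (2 * (M - 1))" .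
  moreover have "(V 0 / 2) powr (p + 1) / (p + 1) \<le> energy plateau_end"
    using energy_at_plateau_end assms by simp
  ultimately have "energy_floor p Ms (V 0) \<le> plateau_end powr (2 * (M - 1)) * energy plateau_end"
    unfolding energy_floor_def using V_0 p_gt_1 by (subst mult.commute) (intro mult_mono; simp)
  also have "\<dots> \<le> energy t"
    using energy_lower_bound plateau_end_pos assms by blast
  finally show ?thesis .
qed

lemma card_zeros01_gt:
  assumes "1 \<le> V 0" "M \<le> Ms" "12 \<le> V 0 powr (p - 1)"
    and "(2 * real m + 1) * window_length p (energy_floor p Ms (V 0)) < 1 / 2"
  shows "m < card (zeros01 V)"
proof -
  have "plateau_end\<^sup>2 \<le> 3 / 12"
    unfolding plateau_end_sq using M_le_3 M_ge_1 assms(3) by (intro frac_le) auto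
  then have "plateau_end\<^sup>2 \<le> (1 / 2)\<^sup>2"
    by (simp add: power2_eq_square)
  then have "plateau_end \<le> 1 / 2"
    by (rule power2_le_imp_le) simp
  then have "\<forall>t\<in>{1 / 2..<1}. energy_floor p Ms (V 0) \<le> energy t"
    using assms(1,2) by (auto intro!: energy_floor_le_energy)
  moreover have "0 < energy_floor p Ms (V 0)"
    unfolding energy_floor_def using V_0 p_gt_1 by simp
  ultimately obtain Z where Z: "Z \<subseteq> {1 / 2..<1}" "card Z = m" "\<forall>z\<in>Z. V z = 0"
    using zeros_in_windows[of "1 / 2" _ m] assms(4) by auto
  have "insert 1 Z \<subseteq> zeros01 V"
    using Z V_1 unfolding zeros01_def by auto
  then have "finite Z" "card (insert 1 Z) \<le> card (zeros01 V)"
    using finite_zeros01 by (auto intro: card_mono finite_subset)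
  moreover have "1 \<notin> Z"
    using Z by auto
  ultimately show ?thesis
    using Z by simp
qed

end

section \<open>Nodal sets and zeros\<close>

lemma continuous_on_nonzero_right:
  fixes f :: "real \<Rightarrow> real"
  assumes "continuous_on {0..1} f" "0 \<le> s" "s < 1" "f s \<noteq> 0"
  obtains t where "s < t" "t < 1" "\<forall>y\<in>{s..t}. f y \<noteq> 0"
proof -
  have "continuous (at s within {0..1}) f"
    using assms(1-3) by (simp add: continuous_on_eq_continuous_within)
  then have "\<forall>\<^sub>F y in at s within {0..1}. f y \<noteq> 0"
    using assms(4) unfolding continuous_within by (rule tendsto_imp_eventually_ne)
  then obtain d where d: "d > 0" "\<And>y. y \<in> {0..1} \<Longrightarrow> y \<noteq> s \<Longrightarrow> dist y s < d \<Longrightarrow> f y \<noteq> 0"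
    unfolding eventually_at by auto
  define t where "t = min (s + d / 2) ((s + 1) / 2)"
  have t: "s < t" "t < 1" "t - s < d"
    unfolding t_def using d assms(3) by (auto simp: min_def)
  have "f y \<noteq> 0" if "y \<in> {s..t}" for y
    using that d(2)[of y] assms(2,4) t by (cases "y = s") (auto simp: dist_real_def)
  with t that show ?thesis
    by blast
qed

lemma component_contains_left_gap:
  fixes S :: "real set"
  assumes C: "C \<in> components S" "bdd_above C" "Sup C \<notin> S"
    and b: "b < Sup C" "{b<..<Sup C} \<subseteq> S"
  shows "{b<..<Sup C} \<subseteq> C"
proof (rule components_maximal[OF C(1) _ b(2)])
  obtain c where c: "c \<in> C" "b < c"
    using less_cSup_iff[OF in_components_nonempty[OF C(1)] C(2)] b(1) by auto
  moreover have "c \<le> Sup C"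
    using cSup_upper[OF c(1) C(2)] .
  moreover have "c \<noteq> Sup C"
    using c in_components_subset[OF C(1)] C(3) by auto
  ultimately show "C \<inter> {b<..<Sup C} \<noteq> {}"
    by auto
qed simp

lemma Sup_component_in_zeros01:
  fixes f :: "real \<Rightarrow> real"
  defines "S \<equiv> {r \<in> {0..<1}. f r \<noteq> 0}"
  assumes cont: "continuous_on {0..1} f" and f1: "f 1 = 0" and C: "C \<in> components S"
  shows "Sup C \<in> zeros01 f"
proof -
  have CS: "C \<subseteq> S" using C by (rule in_components_subset)
  have bdd: "bdd_above C" using CS unfolding S_def by (intro bdd_aboveI[of _ 1]) auto
  define s where "s = Sup C"
  obtain x where x: "x \<in> C" using in_components_nonempty[OF C] by auto
  have C_eq: "C = connected_component_set S x"
    using C x by (metis components_iff connected_component_eq)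
  have xs: "x \<le> s" unfolding s_def using x bdd by (rule cSup_upper)
  have s1: "s \<le> 1" unfolding s_def using x CS unfolding S_def by (intro cSup_least) auto
  have s0: "0 \<le> s" using xs x CS unfolding S_def by auto
  have below: "{x..<s} \<subseteq> C"
  proof
    fix y assume y: "y \<in> {x..<s}"
    then obtain c where c: "c \<in> C" "y < c"
      unfolding s_def using less_cSup_iff[OF _ bdd] x by auto
    have "{x..c} \<subseteq> C"
      by (rule connected_contains_Icc[OF in_components_connected[OF C] x c(1)])
    then show "y \<in> C"
      using y c by auto
  qed
  have fs: "f s = 0"
  proof (rule ccontr)
    assume fs: "f s \<noteq> 0"
    then have s1': "s < 1" using f1 s1 by (cases "s = 1") auto
    obtain t where t: "s < t" "t < 1" "\<forall>y\<in>{s..t}. f y \<noteq> 0"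
      using continuous_on_nonzero_right[OF cont s0 s1' fs] by blast
    have "{x..t} \<subseteq> S"
    proof
      fix y assume y: "y \<in> {x..t}"
      show "y \<in> S"
      proof (cases "y < s")
        case True
        then show ?thesis using below y CS by auto
      next
        case False
        then have "f y \<noteq> 0"
          using t(3) y by auto
        then show ?thesis using y t s0 False unfolding S_def by auto
      qed
    qed
    then have "{x..t} \<subseteq> C"
      unfolding C_eq using x xs t by (intro connected_component_maximal) auto
    then have "t \<le> s"
      unfolding s_def using bdd xs t by (intro cSup_upper) auto
    then show False using t by simp
  qed
  moreover have "s \<noteq> 0"
    using fs x xs CS unfolding S_def by auto
  ultimately show ?thesis
    using s0 s1 unfolding zeros01_def s_def by auto
qed

lemma nonvanishing_left_of_zero:
  fixes f :: "real \<Rightarrow> real"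
  assumes "finite (zeros01 f)" "z \<in> zeros01 f"
  obtains b where "0 \<le> b" "b < z" "{b<..<z} \<subseteq> {r \<in> {0..<1}. f r \<noteq> 0}"
proof -
  define Z where "Z = insert 0 {y \<in> zeros01 f. y < z}"
  have Z: "finite Z" "0 \<in> Z"
    unfolding Z_def using assms(1) by auto
  define b where "b = Max Z"
  have "b \<in> Z"
    unfolding b_def using Z by (intro Max_in) auto
  then have b: "0 \<le> b" "b < z"
    using Max_ge[OF Z] assms(2) unfolding b_def Z_def zeros01_def by auto
  have "{b<..<z} \<subseteq> {r \<in> {0..<1}. f r \<noteq> 0}"
  proof
    fix y assume y: "y \<in> {b<..<z}"
    have "f y \<noteq> 0"
    proof
      assume "f y = 0"
      then have yZ: "y \<in> Z"
        using y b assms(2) unfolding Z_def zeros01_def by auto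
      have "y \<le> b"
        unfolding b_def by (rule Max_ge[OF Z(1) yZ])
      then show False
        using y by simp
    qed
    then show "y \<in> {r \<in> {0..<1}. f r \<noteq> 0}"
      using y b assms(2) unfolding zeros01_def by auto
  qed
  with b that show ?thesis by blast
qed

lemma bij_betw_Sup_components_zeros01:
  fixes f :: "real \<Rightarrow> real"
  defines "S \<equiv> {r \<in> {0..<1}. f r \<noteq> 0}"
  assumes cont: "continuous_on {0..1} f" and f1: "f 1 = 0" and fin: "finite (zeros01 f)"
  shows "bij_betw Sup (components S) (zeros01 f)"
proof -
  have Sup_zero: "Sup C \<in> zeros01 f" if "C \<in> components S" for C
    using Sup_component_in_zeros01[OF cont f1] that unfolding S_def by blast
  have bdd: "bdd_above C" if "C \<in> components S" for C
    using in_components_subset[OF that] unfolding S_def by (intro bdd_aboveI[of _ 1]) auto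
  have Sup_notin: "Sup C \<notin> S" if "C \<in> components S" for C
    using Sup_zero[OF that] unfolding S_def zeros01_def by auto
  have "inj_on Sup (components S)"
  proof (rule inj_onI)
    fix C1 C2 assume C: "C1 \<in> components S" "C2 \<in> components S" "Sup C1 = Sup C2"
    obtain b where b: "0 \<le> b" "b < Sup C1" "{b<..<Sup C1} \<subseteq> S"
      using nonvanishing_left_of_zero[OF fin Sup_zero[OF C(1)]] unfolding S_def by blast
    have "{b<..<Sup C1} \<subseteq> C1"
      using component_contains_left_gap[OF C(1) bdd[OF C(1)] Sup_notin[OF C(1)]] b by blast
    moreover have "{b<..<Sup C1} \<subseteq> C2"
      using component_contains_left_gap[OF C(2) bdd[OF C(2)] Sup_notin[OF C(2)], of b] b C(3) by simp
    ultimately have "{b<..<Sup C1} \<subseteq> C1 \<inter> C2"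
      by blast
    moreover have "(b + Sup C1) / 2 \<in> {b<..<Sup C1}"
      using b(2) by simp
    ultimately have "C1 \<inter> C2 \<noteq> {}"
      by blast
    then show "C1 = C2" using components_nonoverlap[OF C(1,2)] by blast
  qed
  moreover have "zeros01 f \<subseteq> Sup ` components S"
  proof
    fix z assume z: "z \<in> zeros01 f"
    obtain b where b: "0 \<le> b" "b < z" "{b<..<z} \<subseteq> S"
      using nonvanishing_left_of_zero[OF fin z] unfolding S_def by blast
    define C where "C = connected_component_set S ((b + z) / 2)"
    have mid: "(b + z) / 2 \<in> {b<..<z}" using b by auto
    have C: "C \<in> components S"
      unfolding C_def using mid b(3) by (intro componentsI) auto
    have left: "{b<..<z} \<subseteq> C"
      unfolding C_def using mid b(3) by (intro connected_component_maximal) auto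
    have le_z: "y \<le> z" if "y \<in> C" for y
    proof (rule ccontr)
      assume "\<not> y \<le> z"
      then have "z \<in> C"
        using connected_contains_Icc[OF in_components_connected[OF C], of "(b + z) / 2" y] mid left that
        by fastforce
      then show False
        using in_components_subset[OF C] z unfolding S_def zeros01_def by auto
    qed
    have "Sup C = z"
    proof (rule antisym)
      show "Sup C \<le> z"
        using in_components_nonempty[OF C] le_z by (intro cSup_least) auto
      show "z \<le> Sup C"
        using le_z left by (intro dense_le_bounded[OF b(2)] cSup_upper bdd_aboveI) auto
    qed
    then show "z \<in> Sup ` components S" using C by blast
  qed
  ultimately show ?thesis
    using Sup_zero unfolding bij_betw_def by blast
qed

lemma num_nodal_sets_eq_card_zeros01:
  "continuous_on {0..1} f \<Longrightarrow> f 1 = 0 \<Longrightarrow> finite (zeros01 f) \<Longrightarrow> num_nodal_sets f = card (zeros01 f)"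
  unfolding num_nodal_sets_def by (rule bij_betw_same_card[OF bij_betw_Sup_components_zeros01])

lemma ith_zero_in_zeros01:
  assumes "finite (zeros01 f)" "1 \<le> i" "i \<le> card (zeros01 f)"
  shows "ith_zero f i \<in> zeros01 f"
proof -
  have "sorted_list_of_set (zeros01 f) ! (i - 1) \<in> set (sorted_list_of_set (zeros01 f))"
    by (rule nth_mem) (use assms in simp)
  then show ?thesis
    unfolding ith_zero_def using assms(1) by simp
qed

lemma ith_zero_tendsto_1:
  assumes "1 \<le> i" and "(d \<longlongrightarrow> 1) F"
    and "\<forall>\<^sub>F x in F. finite (zeros01 (f x)) \<and> i \<le> card (zeros01 (f x)) \<and> (\<forall>r\<in>zeros01 (f x). d x \<le> r)"
  shows "((\<lambda>x. ith_zero (f x) i) \<longlongrightarrow> 1) F"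
proof (rule tendsto_sandwich[OF _ _ assms(2) tendsto_const])
  show "\<forall>\<^sub>F x in F. d x \<le> ith_zero (f x) i"
    using assms(3) by eventually_elim (use ith_zero_in_zeros01 assms(1) in blast)
  show "\<forall>\<^sub>F x in F. ith_zero (f x) i \<le> 1"
    using assms(3) by eventually_elim (use ith_zero_in_zeros01 assms(1) in \<open>force simp: zeros01_def\<close>)
qed

section \<open>Large amplitudes give short windows\<close>

lemma window_length_tendsto_0:
  assumes p: "p > 1"
  shows "(window_length p \<longlongrightarrow> 0) at_top"
proof -
  define C where "C = ((p + 1) / 2) powr (1 / (p + 1))"
  have C: "C > 0" unfolding C_def using p by simp
  have level: "\<forall>\<^sub>F e in at_top. amplitude_level p e = C * e powr (1 / (p + 1))"
    using eventually_gt_at_top[of 0]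
  proof eventually_elim
    case (elim e)
    have "amplitude_level p e = ((p + 1) / 2 * e) powr (1 / (p + 1))"
      by (simp add: amplitude_level_def)
    also have "\<dots> = C * e powr (1 / (p + 1))"
      unfolding C_def using p elim powr_mult[of "(p + 1) / 2" e "1 / (p + 1)"] by simp
    finally show ?case .
  qed
  have "filterlim (\<lambda>e. C * e powr (1 / (p + 1))) at_top at_top"
    using p by (intro filterlim_tendsto_pos_mult_at_top[OF tendsto_const C real_powr_at_top]) simp
  then have L: "filterlim (amplitude_level p) at_top at_top"
    by (rule filterlim_cong[OF refl refl level, THEN iffD2])
  then have L_pos: "\<forall>\<^sub>F e in at_top. 0 < amplitude_level p e"
    unfolding filterlim_at_top_dense by blast
  have "((\<lambda>e. C * e powr (1 / (p + 1) - 1 / 2)) \<longlongrightarrow> C * 0) at_top"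
    using p by (intro tendsto_mult tendsto_const tendsto_neg_powr filterlim_ident) (simp add: field_simps)
  moreover have "\<forall>\<^sub>F e in at_top. C * e powr (1 / (p + 1) - 1 / 2) = amplitude_level p e / sqrt e"
    using level eventually_gt_at_top[of 0]
    by eventually_elim (simp add: powr_diff powr_half_sqrt[symmetric] less_imp_le)
  ultimately have first: "((\<lambda>e. amplitude_level p e / sqrt e) \<longlongrightarrow> 0) at_top"
    by (simp add: tendsto_cong)
  have "((\<lambda>e. pi * amplitude_level p e powr (- ((p - 1) / 2))) \<longlongrightarrow> pi * 0) at_top"
    using p by (intro tendsto_mult tendsto_const tendsto_neg_powr L) simp
  moreover have "\<forall>\<^sub>F e in at_top. pi * amplitude_level p e powr (- ((p - 1) / 2))
      = pi / sqrt (amplitude_level p e powr (p - 1))"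
    using L_pos by eventually_elim (simp add: powr_minus_divide powr_half_sqrt_powr[symmetric] less_imp_le)
  ultimately have second: "((\<lambda>e. pi / sqrt (amplitude_level p e powr (p - 1))) \<longlongrightarrow> 0) at_top"
    by (simp add: tendsto_cong)
  have "((\<lambda>e. 2 * (amplitude_level p e / sqrt e) + pi / sqrt (amplitude_level p e powr (p - 1)))
      \<longlongrightarrow> 2 * 0 + 0) at_top"
    by (intro tendsto_add tendsto_mult tendsto_const first second)
  then show ?thesis
    unfolding window_length_def[abs_def] by simp
qed

lemma energy_floor_tendsto_at_top:
  assumes p: "p > 1" and Ms: "(p - 1) * (Ms - 1) < p + 1"
  shows "filterlim (energy_floor p Ms) at_top at_top"
proof -
  have lim: "filterlim (\<lambda>\<gamma>. 2 powr (- (p + 1)) / (p + 1) * \<gamma> powr (p + 1 - (p - 1) * (Ms - 1))) at_top at_top"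
    using p Ms by (intro filterlim_tendsto_pos_mult_at_top[OF tendsto_const _ real_powr_at_top]) simp_all
  have ev: "\<forall>\<^sub>F \<gamma> in at_top.
      2 powr (- (p + 1)) / (p + 1) * \<gamma> powr (p + 1 - (p - 1) * (Ms - 1)) = energy_floor p Ms \<gamma>"
    using eventually_gt_at_top[of 0]
  proof eventually_elim
    case (elim \<gamma>)
    have regroup: "a * b / c * d = (b / c) * (a * d)" for a b c d :: real
      by (simp add: divide_inverse ac_simps)
    have "(\<gamma> / 2) powr (p + 1) = \<gamma> powr (p + 1) / 2 powr (p + 1)"
      using elim by (simp add: powr_divide)
    then have "(\<gamma> / 2) powr (p + 1) = \<gamma> powr (p + 1) * 2 powr (- (p + 1))"
      unfolding powr_minus_divide by simp
    moreover have "\<gamma> powr (p + 1) * \<gamma> powr (- (p - 1) * (Ms - 1)) = \<gamma> powr (p + 1 - (p - 1) * (Ms - 1))"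
    proof -
      have "p + 1 - (p - 1) * (Ms - 1) = (p + 1) + (- (p - 1) * (Ms - 1))"
        by (simp add: algebra_simps)
      then show ?thesis by (simp only: powr_add)
    qed
    ultimately show ?case
      unfolding energy_floor_def regroup by simp
  qed
  from lim show ?thesis
    by (rule filterlim_cong[OF refl refl ev, THEN iffD1])
qed

lemma exists_amplitude_threshold:
  assumes "p > 1" "(p - 1) * (Ms - 1) < p + 1"
  obtains G where "1 \<le> G"
    "\<forall>\<gamma>\<ge>G. 12 \<le> \<gamma> powr (p - 1) \<and> (2 * real m + 1) * window_length p (energy_floor p Ms \<gamma>) < 1 / 2"
proof -
  have "((\<lambda>\<gamma>. (2 * real m + 1) * window_length p (energy_floor p Ms \<gamma>)) \<longlongrightarrow> (2 * real m + 1) * 0) at_top"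
    using assms by (intro tendsto_mult tendsto_const filterlim_compose[OF window_length_tendsto_0
          energy_floor_tendsto_at_top])
  then have "\<forall>\<^sub>F \<gamma> in at_top. (2 * real m + 1) * window_length p (energy_floor p Ms \<gamma>) < 1 / 2"
    by (rule order_tendstoD(2)) simp
  moreover have "\<forall>\<^sub>F \<gamma> in at_top. 12 \<le> \<gamma> powr (p - 1)"
    using real_powr_at_top[of "p - 1"] assms(1) unfolding filterlim_at_top by auto
  ultimately obtain G0 where
    "\<forall>\<gamma>\<ge>G0. 12 \<le> \<gamma> powr (p - 1) \<and> (2 * real m + 1) * window_length p (energy_floor p Ms \<gamma>) < 1 / 2"
    unfolding eventually_at_top_linorder using eventually_conj by (metis (no_types, lifting) eventually_at_top_linorder)
  then show ?thesis
    by (intro that[of "max G0 1"]) auto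
qed

section \<open>The radial Henon equation near the origin\<close>

locale henon_radial =
  fixes N :: nat and p \<alpha> :: real and U U' U'' :: "real \<Rightarrow> real"
  assumes N_pos: "N \<ge> 1" and p_gt_1: "p > 1" and \<alpha>_pos: "\<alpha> > 0"
    and U_continuous: "continuous_on {0..1} U" and U_1: "U 1 = 0"
    and U_deriv: "\<And>r. r \<in> {0..<1} \<Longrightarrow> (U has_real_derivative U' r) (at r within {0..<1})"
    and U'_0: "U' 0 = 0"
    and U'_deriv: "\<And>r. r \<in> {0<..<1} \<Longrightarrow> (U' has_real_derivative U'' r) (at r)"
    and ode: "\<And>r. r \<in> {0<..<1} \<Longrightarrow>
      U'' r + (real N - 1) / r * U' r + r powr \<alpha> * \<bar>U r\<bar> powr (p - 1) * U r = 0"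

lemma radial_henon_sol_imp_henon_radial:
  assumes "radial_henon_sol N p \<alpha> U" "N \<ge> 1" "p > 1" "\<alpha> > 0"
  obtains U' U'' where "henon_radial N p \<alpha> U U' U''"
proof -
  from assms(1) obtain U' U'' where "continuous_on {0..1} U" "U 1 = 0"
    "\<forall>r\<in>{0..<1}. (U has_real_derivative U' r) (at r within {0..<1})" "U' 0 = 0"
    "\<forall>r\<in>{0<..<1}. (U' has_real_derivative U'' r) (at r)"
    "\<forall>r\<in>{0<..<1}. U'' r + (real N - 1) / r * U' r + r powr \<alpha> * \<bar>U r\<bar> powr (p - 1) * U r = 0"
    unfolding radial_henon_sol_def by blast
  with assms(2-4) have "henon_radial N p \<alpha> U U' U''"
    by unfold_locales auto
  then show ?thesis by (rule that)
qed

context henon_radial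
begin

lemma U_has_real_derivative_at:
  assumes "0 < r" "r < 1"
  shows "(U has_real_derivative U' r) (at r)"
proof -
  have "at r within {0..<1} = at r"
    using assms by (intro at_within_interior) simp
  then show ?thesis
    using U_deriv[of r] assms by simp
qed

text \<open>\<open>U'\<close> need not be continuous at \<open>0\<close>; only the derivative of \<open>U\<close> at \<open>0\<close> is known. By the
  mean value theorem, \<open>U'\<close> nevertheless takes arbitrarily small values near \<open>0\<close>.\<close>

lemma small_derivative_near_0:
  assumes "0 < s" "s < 1" "0 < \<eta>"
  obtains \<xi> where "0 < \<xi>" "\<xi> \<le> s" "\<bar>U' \<xi>\<bar> < \<eta>"
proof -
  have "((\<lambda>y. (U y - U 0) / (y - 0)) \<longlongrightarrow> 0) (at 0 within {0..<1})"
    using U_deriv[of 0] U'_0 by (simp add: has_field_derivative_iff)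
  then have "\<forall>\<^sub>F y in at 0 within {0..<1}. dist ((U y - U 0) / (y - 0)) 0 < \<eta>"
    using assms(3) by (rule tendstoD)
  then obtain d where d: "d > 0"
    "\<And>y. y \<in> {0..<1} \<Longrightarrow> y \<noteq> 0 \<Longrightarrow> dist y 0 < d \<Longrightarrow> \<bar>(U y - U 0) / y\<bar> < \<eta>"
    unfolding eventually_at by (auto simp: dist_real_def)
  define y where "y = min s (d / 2)"
  have y: "0 < y" "y \<le> s" "y < d" "y < 1"
    unfolding y_def using d assms by auto
  have quotient: "\<bar>(U y - U 0) / y\<bar> < \<eta>"
    using d(2)[of y] y by (auto simp: dist_real_def)
  have "\<exists>l \<xi>. 0 < \<xi> \<and> \<xi> < y \<and> (U has_real_derivative l) (at \<xi>) \<and> U y - U 0 = (y - 0) * l"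
  proof (rule MVT[OF y(1)])
    show "continuous_on {0..y} U"
      using y by (intro continuous_on_subset[OF U_continuous]) auto
    show "U differentiable (at x)" if "0 < x" "x < y" for x
      using U_has_real_derivative_at[of x] that y real_differentiable_def by force
  qed
  then obtain l \<xi> where \<xi>: "0 < \<xi>" "\<xi> < y" "(U has_real_derivative l) (at \<xi>)" "U y - U 0 = y * l"
    by auto
  have "l = U' \<xi>"
    using DERIV_unique[OF \<xi>(3) U_has_real_derivative_at] \<xi> y by auto
  then have "\<bar>U' \<xi>\<bar> < \<eta>"
    using quotient \<xi> y by simp
  then show ?thesis
    using that \<xi> y by auto
qed

definition flux :: "real \<Rightarrow> real" where
  "flux s = s powr (real N - 1) * U' s"

lemma has_real_derivative_flux:
  assumes "0 < s" "s < 1"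
  shows "(flux has_real_derivative - (s powr (real N - 1) * s powr \<alpha> * (\<bar>U s\<bar> powr (p - 1) * U s))) (at s)"
proof -
  have D: "(flux has_real_derivative
      (real N - 1) * s powr (real N - 1 - 1) * U' s + s powr (real N - 1) * U'' s) (at s)"
    unfolding flux_def[abs_def]
    using DERIV_mult[OF has_real_derivative_powr[OF assms(1), of "real N - 1"] U'_deriv[of s]] assms
    by (simp add: ac_simps)
  have "(real N - 1) * s powr (real N - 1 - 1) * U' s + s powr (real N - 1) * U'' s
      = s powr (real N - 1) * (U'' s + (real N - 1) / s * U' s)"
    using assms by (simp add: powr_diff field_simps power2_eq_square)
  also have "U'' s + (real N - 1) / s * U' s = - (s powr \<alpha> * (\<bar>U s\<bar> powr (p - 1) * U s))"
    using ode[of s] assms by (auto simp: algebra_simps eq_neg_iff_add_eq_0)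
  finally show ?thesis
    using D by (simp add: ac_simps)
qed

lemma weight_pos_le_1:
  assumes "0 < s" "s \<le> 1"
  shows "0 < s powr (real N - 1)" "s powr (real N - 1) \<le> 1"
  using assms N_pos by (auto intro: powr_le1)

lemma U'_nonpos_while_positive:
  assumes T: "0 < T" "T < 1" and pos: "\<forall>s\<in>{0..<T}. U s > 0" and s: "0 < s" "s < T"
  shows "U' s \<le> 0"
proof -
  have flux_antimono: "flux s1 \<le> flux s0" if "0 < s0" "s0 \<le> s1" "s1 < T" for s0 s1
  proof (rule DERIV_nonpos_imp_decreasing_open[OF that(2)])
    fix x assume x: "s0 < x" "x < s1"
    then have "U x > 0" using pos that by auto
    then show "\<exists>y. (flux has_real_derivative y) (at x) \<and> y \<le> 0"
      using has_real_derivative_flux[of x] x that T by (intro exI) auto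
  next
    show "continuous_on {s0..s1} flux"
      using that T
      by (intro continuous_at_imp_continuous_on ballI DERIV_isCont[OF has_real_derivative_flux]) auto
  qed
  have "flux s \<le> 0"
  proof (rule ccontr)
    assume "\<not> flux s \<le> 0"
    then obtain \<xi> where \<xi>: "0 < \<xi>" "\<xi> \<le> s" "\<bar>U' \<xi>\<bar> < flux s"
      using small_derivative_near_0[of s "flux s"] s T by auto
    have "flux s \<le> flux \<xi>"
      using flux_antimono \<xi> s by auto
    moreover have w: "0 < \<xi> powr (real N - 1)" "\<xi> powr (real N - 1) \<le> 1"
      using weight_pos_le_1[of \<xi>] \<xi> s T by auto
    have "flux \<xi> \<le> \<xi> powr (real N - 1) * \<bar>U' \<xi>\<bar>"
      unfolding flux_def using w by (intro mult_left_mono) auto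
    also have "\<dots> \<le> \<bar>U' \<xi>\<bar>"
      using w by (intro mult_left_le_one_le) auto
    finally show False
      using \<open>flux s \<le> flux \<xi>\<close> \<xi>(3) by linarith
  qed
  then show ?thesis
    unfolding flux_def using weight_pos_le_1[of s] s T by (simp add: mult_le_0_iff)
qed

lemma U_le_initial_while_positive:
  assumes T: "0 < T" "T < 1" and pos: "\<forall>s\<in>{0..<T}. U s > 0" and x: "0 \<le> x" "x < T"
  shows "U x \<le> U 0"
proof (rule DERIV_nonpos_imp_decreasing_open[OF x(1)])
  fix y assume "0 < y" "y < x"
  then show "\<exists>D. (U has_real_derivative D) (at y) \<and> D \<le> 0"
    using U_has_real_derivative_at[of y] U'_nonpos_while_positive[OF T pos, of y] x T by auto
qed (use x T in \<open>intro continuous_on_subset[OF U_continuous]; auto\<close>)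

lemma U'_lower_bound_while_positive:
  assumes T: "0 < T" "T < 1" and pos: "\<forall>s\<in>{0..<T}. U s > 0" and s: "0 < s" "s < T"
  shows "- (U 0 powr p * s powr (\<alpha> + 1) / (real N + \<alpha>)) \<le> U' s"
proof -
  define K where "K = real N + \<alpha>"
  have K: "K > 0" unfolding K_def using \<alpha>_pos by simp
  define \<psi> where "\<psi> x = flux x + U 0 powr p * x powr K / K" for x
  have \<psi>_deriv: "(\<psi> has_real_derivative x powr (K - 1) * (U 0 powr p - U x powr p)) (at x)"
    if x: "0 < x" "x < T" for x
  proof -
    have Ux: "U x > 0" using pos x by auto
    have D: "(\<psi> has_real_derivative - (x powr (real N - 1) * x powr \<alpha> * (\<bar>U x\<bar> powr (p - 1) * U x))
        + U 0 powr p * (K * x powr (K - 1)) / K) (at x)"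
      unfolding \<psi>_def[abs_def]
      by (intro DERIV_add has_real_derivative_flux DERIV_cdivide DERIV_cmult has_real_derivative_powr)
        (use x T in auto)
    have weights: "x powr (real N - 1) * x powr \<alpha> = x powr (K - 1)"
      unfolding K_def by (simp add: powr_add[symmetric] algebra_simps)
    have power: "\<bar>U x\<bar> powr (p - 1) * U x = U x powr p"
      using Ux by (simp add: powr_diff)
    show ?thesis
      using D K unfolding weights power by (simp add: algebra_simps)
  qed
  have \<psi>_mono: "\<psi> x \<le> \<psi> s" if "0 < x" "x \<le> s" for x
  proof (rule DERIV_nonneg_imp_increasing_open[OF that(2)])
    fix y assume y: "x < y" "y < s"
    then have "0 < U y"
      using pos that s by auto
    then have "U y powr p \<le> U 0 powr p"
      using U_le_initial_while_positive[OF T pos, of y] y that s p_gt_1 by (intro powr_mono2) auto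
    then show "\<exists>D. (\<psi> has_real_derivative D) (at y) \<and> 0 \<le> D"
      using \<psi>_deriv[of y] y that s
      by (intro exI[of _ "y powr (K - 1) * (U 0 powr p - U y powr p)"]) auto
  next
    show "continuous_on {x..s} \<psi>"
      using that s by (intro continuous_at_imp_continuous_on ballI DERIV_isCont[OF \<psi>_deriv]) auto
  qed
  have "\<psi> s \<ge> 0"
  proof (rule ccontr)
    assume "\<not> \<psi> s \<ge> 0"
    then obtain \<xi> where \<xi>: "0 < \<xi>" "\<xi> \<le> s" "\<bar>U' \<xi>\<bar> < - \<psi> s"
      using small_derivative_near_0[of s "- \<psi> s"] s T by auto
    have "0 \<le> U 0 powr p * \<xi> powr K / K"
      using K by simp
    then have upper: "flux \<xi> \<le> \<psi> s"
      using \<psi>_mono[OF \<xi>(1,2)] unfolding \<psi>_def by linarith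
    have w: "0 < \<xi> powr (real N - 1)" "\<xi> powr (real N - 1) \<le> 1"
      using weight_pos_le_1[of \<xi>] \<xi> s T by auto
    have "- \<bar>U' \<xi>\<bar> \<le> \<xi> powr (real N - 1) * (- \<bar>U' \<xi>\<bar>)"
      using w mult_left_le_one_le[of "\<bar>U' \<xi>\<bar>" "\<xi> powr (real N - 1)"] by simp
    also have "\<dots> \<le> flux \<xi>"
      unfolding flux_def using w by (intro mult_left_mono) auto
    finally show False
      using upper \<xi>(3) by linarith
  qed
  then have "- (U 0 powr p * s powr K / K) \<le> s powr (real N - 1) * U' s"
    unfolding \<psi>_def flux_def by linarith
  moreover have "s powr K = s powr (real N - 1) * s powr (\<alpha> + 1)"
    unfolding K_def by (simp add: powr_add[symmetric] algebra_simps)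
  ultimately have "s powr (real N - 1) * (- (U 0 powr p * s powr (\<alpha> + 1) / K)) \<le> s powr (real N - 1) * U' s"
    by (simp add: algebra_simps)
  then show ?thesis
    unfolding K_def[symmetric] by (rule mult_left_le_imp_le) (use weight_pos_le_1[of s] s T in auto)
qed

lemma U_lower_bound_while_positive:
  assumes T: "0 < T" "T < 1" and pos: "\<forall>s\<in>{0..<T}. U s > 0"
  shows "U 0 - U 0 powr p * T powr (\<alpha> + 2) / ((real N + \<alpha>) * (\<alpha> + 2)) \<le> U T"
proof -
  define \<phi> where "\<phi> s = U s + U 0 powr p * s powr (\<alpha> + 2) / ((real N + \<alpha>) * (\<alpha> + 2))" for s
  have "\<phi> 0 \<le> \<phi> T"
  proof (rule DERIV_nonneg_imp_increasing_open[OF less_imp_le[OF T(1)]])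
    fix x assume x: "0 < x" "x < T"
    have "(\<phi> has_real_derivative U' x + U 0 powr p * ((\<alpha> + 2) * x powr (\<alpha> + 2 - 1))
        / ((real N + \<alpha>) * (\<alpha> + 2))) (at x)"
      unfolding \<phi>_def[abs_def]
      by (intro DERIV_add U_has_real_derivative_at DERIV_cdivide DERIV_cmult has_real_derivative_powr)
        (use x T in auto)
    moreover have "U 0 powr p * ((\<alpha> + 2) * x powr (\<alpha> + 2 - 1)) / ((real N + \<alpha>) * (\<alpha> + 2))
        = U 0 powr p * x powr (\<alpha> + 1) / (real N + \<alpha>)"
    proof -
      have "\<alpha> + 2 - 1 = \<alpha> + 1" "\<alpha> + 2 \<noteq> 0"
        using \<alpha>_pos by auto
      then show ?thesis
        by (simp add: ac_simps)
    qed
    ultimately show "\<exists>D. (\<phi> has_real_derivative D) (at x) \<and> 0 \<le> D"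
      using U'_lower_bound_while_positive[OF T pos x] by (intro exI) auto
  next
    have "continuous_on {0..T} (\<lambda>s. s powr (\<alpha> + 2))"
      by (rule continuous_on_powr') (use \<alpha>_pos in \<open>auto intro: continuous_intros\<close>)
    moreover have "continuous_on {0..T} U"
      using T by (intro continuous_on_subset[OF U_continuous]) auto
    moreover have "(real N + \<alpha>) * (\<alpha> + 2) \<noteq> 0"
      using \<alpha>_pos by simp
    ultimately show "continuous_on {0..T} \<phi>"
      unfolding \<phi>_def by (intro continuous_on_add continuous_on_divide continuous_on_mult continuous_on_const) auto
  qed
  then show ?thesis
    unfolding \<phi>_def using \<alpha>_pos by simp
qed

lemma initial_drop_le_half:
  assumes U0: "U 0 > 0" and T: "0 \<le> T" "T \<le> r"
    and small: "U 0 powr (p - 1) * r powr (\<alpha> + 2) \<le> (real N + \<alpha>) * (\<alpha> + 2) / 2"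
  shows "U 0 powr p * T powr (\<alpha> + 2) / ((real N + \<alpha>) * (\<alpha> + 2)) \<le> U 0 / 2"
proof -
  have "U 0 powr p = U 0 * U 0 powr (p - 1)"
    using powr_add[of "U 0" 1 "p - 1"] U0 by simp
  moreover have "T powr (\<alpha> + 2) \<le> r powr (\<alpha> + 2)"
    using T \<alpha>_pos by (intro powr_mono2) auto
  ultimately have "U 0 powr p * T powr (\<alpha> + 2) \<le> U 0 * (U 0 powr (p - 1) * r powr (\<alpha> + 2))"
    using U0 by (simp add: mult_left_mono)
  also have "\<dots> \<le> U 0 * ((real N + \<alpha>) * (\<alpha> + 2) / 2)"
    using small U0 by (intro mult_left_mono) auto
  finally show ?thesis
    using \<alpha>_pos by (simp add: divide_le_eq)
qed

text \<open>A continuation argument: at the first point where \<open>U\<close> drops to \<open>U 0 / 3\<close>, \<open>U\<close> is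
  positive before it, so the lower bound puts it above \<open>U 0 / 2\<close>.\<close>

lemma U_gt_third_initial:
  assumes U0: "U 0 > 0" and r: "0 \<le> r" "r < 1"
    and small: "U 0 powr (p - 1) * r powr (\<alpha> + 2) \<le> (real N + \<alpha>) * (\<alpha> + 2) / 2"
  shows "\<forall>s\<in>{0..r}. U 0 / 3 < U s"
proof (rule ccontr)
  assume "\<not> (\<forall>s\<in>{0..r}. U 0 / 3 < U s)"
  define A where "A = {s \<in> {0..r}. U s \<le> U 0 / 3}"
  have A: "A \<noteq> {}" "bdd_below A"
    unfolding A_def using \<open>\<not> _\<close> by (auto simp: not_less)
  have "closed A"
    unfolding A_def using r
    by (intro continuous_on_closed_Collect_le continuous_on_subset[OF U_continuous] continuous_on_const) auto
  define T where "T = Inf A"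
  have "T \<in> A"
    unfolding T_def by (rule closed_contains_Inf[OF A \<open>closed A\<close>])
  then have T: "0 \<le> T" "T \<le> r" "U T \<le> U 0 / 3"
    unfolding A_def by auto
  have "T \<noteq> 0" using T U0 by auto
  have "U s > 0" if "s \<in> {0..<T}" for s
  proof -
    have "s \<notin> A"
      using that cInf_lower[OF _ A(2), of s] unfolding T_def by force
    then show ?thesis
      using that T U0 unfolding A_def by auto
  qed
  then have "U 0 - U 0 powr p * T powr (\<alpha> + 2) / ((real N + \<alpha>) * (\<alpha> + 2)) \<le> U T"
    using T \<open>T \<noteq> 0\<close> r by (intro U_lower_bound_while_positive) auto
  then show False
    using initial_drop_le_half[OF U0 T(1,2) small] T U0 by linarith
qed

lemma U_ge_half_initial:
  assumes U0: "U 0 > 0" and r: "0 \<le> r" "r < 1"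
    and small: "U 0 powr (p - 1) * r powr (\<alpha> + 2) \<le> (real N + \<alpha>) * (\<alpha> + 2) / 2"
  shows "U 0 / 2 \<le> U r"
proof (cases "r = 0")
  case False
  have "\<forall>s\<in>{0..<r}. U s > 0"
  proof
    fix s assume "s \<in> {0..<r}"
    then have "U 0 / 3 < U s"
      using U_gt_third_initial[OF assms] by auto
    then show "U s > 0"
      using U0 by linarith
  qed
  then have "U 0 - U 0 powr p * r powr (\<alpha> + 2) / ((real N + \<alpha>) * (\<alpha> + 2)) \<le> U r"
    using False r by (intro U_lower_bound_while_positive) auto
  then show ?thesis
    using initial_drop_le_half[OF U0 r(1) order_refl small] by linarith
qed (use U0 in simp)

end

section \<open>Rescaling the Henon equation\<close>

definition henon_dim :: "nat \<Rightarrow> real \<Rightarrow> real" where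
  "henon_dim N \<alpha> = 2 * (real N + \<alpha>) / (\<alpha> + 2)"

definition henon_rescaled :: "real \<Rightarrow> real \<Rightarrow> (real \<Rightarrow> real) \<Rightarrow> real \<Rightarrow> real" where
  "henon_rescaled p \<alpha> U t = (2 / (\<alpha> + 2)) powr (2 / (p - 1)) * U (t powr (2 / (\<alpha> + 2)))"

lemma bij_betw_zeros01_henon_rescaled:
  assumes "\<alpha> > -2"
  shows "bij_betw (\<lambda>t. t powr (2 / (\<alpha> + 2))) (zeros01 (henon_rescaled p \<alpha> U)) (zeros01 U)"
proof -
  define \<iota> where "\<iota> = 2 / (\<alpha> + 2)"
  have \<iota>: "\<iota> > 0" unfolding \<iota>_def using assms by simp
  have zeros: "zeros01 (henon_rescaled p \<alpha> U) = {t \<in> {0<..1}. U (t powr \<iota>) = 0}"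
    using assms by (auto simp: zeros01_def henon_rescaled_def \<iota>_def)
  show ?thesis
    unfolding \<iota>_def[symmetric]
  proof (rule bij_betw_byWitness[where f'="\<lambda>r. r powr (1 / \<iota>)"])
    have inverse: "(x powr a) powr (1 / a) = x" "(x powr (1 / a)) powr a = x" if "0 < x" "0 < a" for x a :: real
      using that by (simp_all add: powr_powr)
    have into: "x powr a \<in> {0<..1}" if "x \<in> {0<..1}" "0 < a" for x a :: real
      using that by (auto intro: powr_le1)
    show "\<forall>t\<in>zeros01 (henon_rescaled p \<alpha> U). (t powr \<iota>) powr (1 / \<iota>) = t"
      unfolding zeros using \<iota> inverse by auto
    show "\<forall>r\<in>zeros01 U. (r powr (1 / \<iota>)) powr \<iota> = r"
      unfolding zeros01_def using \<iota> inverse by auto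
    show "(\<lambda>t. t powr \<iota>) ` zeros01 (henon_rescaled p \<alpha> U) \<subseteq> zeros01 U"
      unfolding zeros unfolding zeros01_def using \<iota> into by auto
    show "(\<lambda>r. r powr (1 / \<iota>)) ` zeros01 U \<subseteq> zeros01 (henon_rescaled p \<alpha> U)"
      unfolding zeros unfolding zeros01_def using \<iota> into inverse by auto
  qed
qed

context henon_radial
begin

lemma rescaling_constants:
  shows "0 < 2 / (\<alpha> + 2)" "2 / (\<alpha> + 2) < 1" "2 / (\<alpha> + 2) * (\<alpha> + 2) = 2"
    and "(2 / (\<alpha> + 2)) powr (2 / (p - 1)) > 0"
    and "((2 / (\<alpha> + 2)) powr (2 / (p - 1))) powr (p - 1) = (2 / (\<alpha> + 2))\<^sup>2"
proof -
  show \<iota>: "0 < 2 / (\<alpha> + 2)" "2 / (\<alpha> + 2) < 1" "2 / (\<alpha> + 2) * (\<alpha> + 2) = 2"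
    using \<alpha>_pos by (auto simp: field_simps)
  then show "(2 / (\<alpha> + 2)) powr (2 / (p - 1)) > 0"
    by simp
  have "2 / (p - 1) * (p - 1) = 2"
    using p_gt_1 by (simp add: field_simps)
  then have "((2 / (\<alpha> + 2)) powr (2 / (p - 1))) powr (p - 1) = (2 / (\<alpha> + 2)) powr 2"
    by (simp only: powr_powr)
  then show "((2 / (\<alpha> + 2)) powr (2 / (p - 1))) powr (p - 1) = (2 / (\<alpha> + 2))\<^sup>2"
    using \<iota> by simp
qed

lemma lane_emden_henon_rescaled:
  assumes M_le_3: "henon_dim N \<alpha> \<le> 3"
  obtains V' V'' where "lane_emden (henon_rescaled p \<alpha> U) V' V'' (henon_dim N \<alpha>) p"
proof -
  define \<iota> where "\<iota> = 2 / (\<alpha> + 2)"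
  define c where "c = \<iota> powr (2 / (p - 1))"
  have \<iota>: "0 < \<iota>" "\<iota> < 1" "\<iota> * (\<alpha> + 2) = 2" and c: "c > 0" and c_pow: "c powr (p - 1) = \<iota>\<^sup>2"
    unfolding \<iota>_def c_def by (fact rescaling_constants)+
  have r01: "t powr \<iota> \<in> {0<..<1}" if "0 < t" "t < 1" for t
    using that \<iota> powr_less_mono2[of \<iota> t 1] by auto
  define V' where "V' t = c * U' (t powr \<iota>) * (\<iota> * t powr (\<iota> - 1))" for t
  define V'' where "V'' t = c * (U'' (t powr \<iota>) * (\<iota> * t powr (\<iota> - 1)) * (\<iota> * t powr (\<iota> - 1))
      + U' (t powr \<iota>) * (\<iota> * ((\<iota> - 1) * t powr (\<iota> - 1 - 1))))" for t
  have "lane_emden (\<lambda>t. c * U (t powr \<iota>)) V' V'' (henon_dim N \<alpha>) p"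
  proof
    show "1 < p" by (rule p_gt_1)
    show "1 \<le> henon_dim N \<alpha>"
      unfolding henon_dim_def using N_pos \<alpha>_pos by (simp add: field_simps)
    show "henon_dim N \<alpha> \<le> 3" by (rule M_le_3)
    fix t :: real assume t: "0 < t" "t < 1"
    define r where "r = t powr \<iota>"
    have r: "0 < r" "r < 1" using r01[OF t] unfolding r_def by auto
    have dpow: "((\<lambda>t. t powr \<iota>) has_real_derivative \<iota> * t powr (\<iota> - 1)) (at t)"
      by (rule has_real_derivative_powr[OF t(1)])
    show "((\<lambda>t. c * U (t powr \<iota>)) has_real_derivative V' t) (at t)"
      unfolding V'_def using DERIV_cmult[OF DERIV_chain2[OF U_has_real_derivative_at dpow], of c] r
      unfolding r_def by (simp add: mult.assoc)
    have dpow': "((\<lambda>t. \<iota> * t powr (\<iota> - 1)) has_real_derivative \<iota> * ((\<iota> - 1) * t powr (\<iota> - 1 - 1))) (at t)"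
      by (intro DERIV_cmult has_real_derivative_powr[OF t(1)])
    have "((\<lambda>t. U' (t powr \<iota>)) has_real_derivative U'' (t powr \<iota>) * (\<iota> * t powr (\<iota> - 1))) (at t)"
      using DERIV_chain2[OF U'_deriv[OF r01[OF t]] dpow] .
    from DERIV_cmult[OF DERIV_mult[OF this dpow'], of c]
    show "(V' has_real_derivative V'' t) (at t)"
      unfolding V'_def[abs_def] V''_def by (simp add: ac_simps)
    have power_1: "t powr (\<iota> - 1) = r / t"
      unfolding r_def using t by (simp add: powr_diff)
    have power_2: "t powr (\<iota> - 1 - 1) = r / t\<^sup>2"
      unfolding r_def using t by (simp add: powr_diff powr_add[symmetric])
    have "r powr \<alpha> * r powr 2 = r powr (\<alpha> + 2)"
      by (simp add: powr_add)
    also have "\<dots> = t powr (\<iota> * (\<alpha> + 2))"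
      unfolding r_def by (simp add: powr_powr)
    also have "\<iota> * (\<alpha> + 2) = 2"
      by (rule \<iota>(3))
    finally have "r powr \<alpha> * r\<^sup>2 = t\<^sup>2"
      using r t by simp
    then have weight: "r powr \<alpha> = t\<^sup>2 / r\<^sup>2"
      using r by (simp add: field_simps)
    have nonlinear: "\<bar>c * U r\<bar> powr (p - 1) * (c * U r) = \<iota>\<^sup>2 * c * (\<bar>U r\<bar> powr (p - 1) * U r)"
      using c c_pow by (simp add: abs_mult powr_mult)
    have U'': "U'' r = - ((real N - 1) / r * U' r) - r powr \<alpha> * (\<bar>U r\<bar> powr (p - 1) * U r)"
      using ode[of r] r by (auto simp: algebra_simps eq_neg_iff_add_eq_0)
    have "henon_dim N \<alpha> = \<iota> * (real N + \<alpha>)"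
      unfolding henon_dim_def \<iota>_def by simp
    then have dim: "henon_dim N \<alpha> - 1 = \<iota> * (real N - 1) - \<iota> + 1"
      using \<iota>(3) by (simp add: algebra_simps)
    have identity: "c * ((- (n / r * A) - Q * P) * (\<iota> * (r / t)) * (\<iota> * (r / t)) + A * (\<iota> * ((\<iota> - 1) * (r / t\<^sup>2))))
        + (\<iota> * n - \<iota> + 1) / t * (c * A * (\<iota> * (r / t))) + \<iota>\<^sup>2 * c * P = 0"
      if "Q = t\<^sup>2 / r\<^sup>2" for n A P Q :: real
      unfolding that using t r by (simp add: field_simps power2_eq_square)
    show "V'' t + (henon_dim N \<alpha> - 1) / t * V' t + \<bar>c * U (t powr \<iota>)\<bar> powr (p - 1) * (c * U (t powr \<iota>)) = 0"
      unfolding V''_def V'_def r_def[symmetric] power_1 power_2 nonlinear U'' dim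
      by (rule identity[OF weight])
  qed
  moreover have "henon_rescaled p \<alpha> U = (\<lambda>t. c * U (t powr \<iota>))"
    unfolding henon_rescaled_def[abs_def] c_def \<iota>_def ..
  ultimately show ?thesis
    using that by simp
qed

lemma lane_emden_solution_henon_rescaled:
  assumes M_le_3: "henon_dim N \<alpha> \<le> 3" and U_0: "U 0 > 0"
  obtains V' V'' where "lane_emden_solution (henon_rescaled p \<alpha> U) V' V'' (henon_dim N \<alpha>) p"
proof -
  obtain V' V'' where V: "lane_emden (henon_rescaled p \<alpha> U) V' V'' (henon_dim N \<alpha>) p"
    using lane_emden_henon_rescaled M_le_3 by blast
  define \<iota> where "\<iota> = 2 / (\<alpha> + 2)"
  define c where "c = \<iota> powr (2 / (p - 1))"
  have \<iota>: "0 < \<iota>" "\<iota> * (\<alpha> + 2) = 2" and c: "c > 0" and c_pow: "c powr (p - 1) = \<iota>\<^sup>2"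
    unfolding \<iota>_def c_def by (fact rescaling_constants)+
  have rescaled: "henon_rescaled p \<alpha> U = (\<lambda>t. c * U (t powr \<iota>))"
    unfolding henon_rescaled_def[abs_def] c_def \<iota>_def ..
  have "lane_emden_solution (\<lambda>t. c * U (t powr \<iota>)) V' V'' (henon_dim N \<alpha>) p"
  proof (rule lane_emden_solution.intro[OF V[unfolded rescaled]], unfold_locales)
    show "continuous_on {0..1} (\<lambda>t. c * U (t powr \<iota>))"
    proof (intro continuous_on_mult continuous_on_const continuous_on_compose2[OF U_continuous])
      show "continuous_on {0..1} (\<lambda>t. t powr \<iota>)"
        by (rule continuous_on_powr') (use \<iota> in \<open>auto intro: continuous_intros\<close>)
      show "(\<lambda>t. t powr \<iota>) ` {0..1} \<subseteq> {0..1}"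
        using \<iota> by (auto intro!: powr_le1)
    qed
    show "c * U (1 powr \<iota>) = 0" using U_1 by simp
    show "0 < c * U (0 powr \<iota>)" using U_0 c by simp
    fix t :: real
    assume t: "0 \<le> t" "t < 1"
      and small: "(c * U (0 powr \<iota>)) powr (p - 1) * t\<^sup>2 \<le> henon_dim N \<alpha>"
    define r where "r = t powr \<iota>"
    have r: "0 \<le> r" "r < 1"
      unfolding r_def using t \<iota> powr_less_mono2[of \<iota> t 1] by auto
    have "r powr (\<alpha> + 2) = t powr (\<iota> * (\<alpha> + 2))"
      unfolding r_def by (simp add: powr_powr)
    then have r_pow: "r powr (\<alpha> + 2) = t\<^sup>2"
      using \<iota> t by simp
    have "(c * U 0) powr (p - 1) = \<iota>\<^sup>2 * U 0 powr (p - 1)"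
      using c U_0 c_pow by (simp add: powr_mult)
    then have "\<iota>\<^sup>2 * (U 0 powr (p - 1) * t\<^sup>2) \<le> \<iota> * (real N + \<alpha>)"
      using small by (simp add: henon_dim_def \<iota>_def mult.assoc)
    then have "\<iota> * (U 0 powr (p - 1) * t\<^sup>2) \<le> real N + \<alpha>"
      using \<iota> by (simp add: power2_eq_square mult.assoc mult_le_cancel_left_pos)
    then have "\<iota> * (\<alpha> + 2) * (U 0 powr (p - 1) * t\<^sup>2) \<le> (real N + \<alpha>) * (\<alpha> + 2)"
      using \<alpha>_pos by (simp add: mult.commute mult.left_commute mult_right_mono)
    then have "U 0 powr (p - 1) * r powr (\<alpha> + 2) \<le> (real N + \<alpha>) * (\<alpha> + 2) / 2"
      unfolding \<iota> r_pow by simp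
    then have "U 0 / 2 \<le> U r"
      using U_0 r by (intro U_ge_half_initial) auto
    then show "c * U (0 powr \<iota>) / 2 \<le> c * U (t powr \<iota>)"
      using c unfolding r_def by simp
  qed
  then show ?thesis
    using that unfolding rescaled by blast
qed

lemma henon_rescaled_zeros_ge:
  assumes "N \<ge> 2" "U 0 > 0" "num_nodal_sets U = m" "henon_dim N \<alpha> \<le> Ms" "Ms \<le> 3" "1 \<le> G"
    and G: "\<forall>\<gamma>\<ge>G. 12 \<le> \<gamma> powr (p - 1) \<and> (2 * real m + 1) * window_length p (energy_floor p Ms \<gamma>) < 1 / 2"
  shows "finite (zeros01 U) \<and> card (zeros01 U) = m \<and>
    (\<forall>t\<in>zeros01 (henon_rescaled p \<alpha> U). min (1 / 2) (sqrt (2 / G powr (p - 1))) \<le> t)"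
proof -
  have "henon_dim N \<alpha> \<le> 3"
    using assms(4,5) by linarith
  then obtain V' V'' where "lane_emden_solution (henon_rescaled p \<alpha> U) V' V'' (henon_dim N \<alpha>) p"
    using lane_emden_solution_henon_rescaled assms(2) by blast
  then interpret V: lane_emden_solution "henon_rescaled p \<alpha> U" V' V'' "henon_dim N \<alpha>" p .
  have bij: "bij_betw (\<lambda>t. t powr (2 / (\<alpha> + 2))) (zeros01 (henon_rescaled p \<alpha> U)) (zeros01 U)"
    using \<alpha>_pos by (intro bij_betw_zeros01_henon_rescaled) simp
  have finite: "finite (zeros01 U)"
    using bij_betw_finite[OF bij] V.finite_zeros01 by simp
  have card: "card (zeros01 U) = m"
    using num_nodal_sets_eq_card_zeros01[OF U_continuous U_1 finite] assms(3) by simp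
  have bounded: "henon_rescaled p \<alpha> U 0 < G"
  proof (rule ccontr)
    assume "\<not> henon_rescaled p \<alpha> U 0 < G"
    then have "m < card (zeros01 (henon_rescaled p \<alpha> U))"
      using G assms(4,6) by (intro V.card_zeros01_gt) auto
    then show False
      using bij_betw_same_card[OF bij] card by simp
  qed
  have "sqrt (2 / G powr (p - 1)) \<le> V.plateau_end"
  proof -
    have "henon_rescaled p \<alpha> U 0 powr (p - 1) \<le> G powr (p - 1)"
      using V.V_0 bounded p_gt_1 by (intro powr_mono2) auto
    moreover have "2 \<le> henon_dim N \<alpha>"
      unfolding henon_dim_def using assms(1) \<alpha>_pos by (simp add: field_simps)
    ultimately have "2 / G powr (p - 1) \<le> henon_dim N \<alpha> / henon_rescaled p \<alpha> U 0 powr (p - 1)"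
      using V.V_0 by (intro frac_le) auto
    then show ?thesis
      unfolding V.plateau_end_def by simp
  qed
  then have "min (1 / 2) (sqrt (2 / G powr (p - 1))) \<le> t" if "t \<in> zeros01 (henon_rescaled p \<alpha> U)" for t
    using V.zeros01_ge_plateau_end[OF that] by auto
  with finite card show ?thesis
    by blast
qed

end

lemma exists_dimension_margin:
  assumes "p > 1"
  obtains Ms :: real where "2 < Ms" "Ms \<le> 3" "(p - 1) * (Ms - 1) < p + 1"
proof -
  define \<eta> where "\<eta> = min 1 (1 / (p - 1))"
  have \<eta>: "0 < \<eta>" "\<eta> \<le> 1"
    unfolding \<eta>_def using assms by auto
  have "(p - 1) * \<eta> \<le> (p - 1) * (1 / (p - 1))"
    unfolding \<eta>_def using assms by (intro mult_left_mono) auto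
  then have "(p - 1) * ((2 + \<eta>) - 1) < p + 1"
    using assms by (simp add: algebra_simps)
  with \<eta> show ?thesis
    by (intro that[of "2 + \<eta>"]) auto
qed

lemma henon_dim_le:
  assumes "2 < Ms" "0 < \<alpha>" "2 * (real N - 2) / (Ms - 2) \<le> \<alpha>"
  shows "henon_dim N \<alpha> \<le> Ms"
proof -
  have "2 * (real N - 2) \<le> \<alpha> * (Ms - 2)"
    using assms by (simp add: pos_divide_le_eq)
  then have "2 * (real N + \<alpha>) \<le> \<alpha> * (Ms - 2) + 2 * \<alpha> + 4"
    by simp
  also have "\<dots> \<le> Ms * (\<alpha> + 2)"
    using assms(1) by (simp add: algebra_simps)
  finally show ?thesis
    unfolding henon_dim_def using assms(2) by (simp add: pos_divide_le_eq)
qed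

lemma zeros01_ge_powr_of_rescaled:
  assumes "\<alpha> > -2" "0 \<le> \<delta>" "\<forall>t\<in>zeros01 (henon_rescaled p \<alpha> U). \<delta> \<le> t" "r \<in> zeros01 U"
  shows "\<delta> powr (2 / (\<alpha> + 2)) \<le> r"
proof -
  have "r \<in> (\<lambda>t. t powr (2 / (\<alpha> + 2))) ` zeros01 (henon_rescaled p \<alpha> U)"
    using bij_betw_imp_surj_on[OF bij_betw_zeros01_henon_rescaled[OF assms(1)]] assms(4) by simp
  then obtain t where t: "t \<in> zeros01 (henon_rescaled p \<alpha> U)" "r = t powr (2 / (\<alpha> + 2))"
    by blast
  show ?thesis
    unfolding t(2) using t(1) assms(1-3) by (intro powr_mono2) auto
qed

lemma henon_zeros_uniform:
  assumes "N \<ge> 3" "p > 1"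
    and sol: "\<And>\<alpha>. \<alpha> > alpha_p N p \<Longrightarrow>
      radial_henon_sol N p \<alpha> (u \<alpha>) \<and> num_nodal_sets (u \<alpha>) = m \<and> u \<alpha> 0 > 0"
  obtains \<delta> \<alpha>0 where "0 < \<delta>" "\<delta> < 1" "\<alpha>0 > alpha_p N p"
    "\<And>\<alpha>. \<alpha>0 \<le> \<alpha> \<Longrightarrow> u \<alpha> 1 = 0 \<and> finite (zeros01 (u \<alpha>)) \<and> card (zeros01 (u \<alpha>)) = m \<and>
      (\<forall>t\<in>zeros01 (henon_rescaled p \<alpha> (u \<alpha>)). \<delta> \<le> t)"
proof -
  obtain Ms where Ms: "2 < Ms" "Ms \<le> 3" "(p - 1) * (Ms - 1) < p + 1"
    using exists_dimension_margin[OF assms(2)] by blast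
  obtain G where G: "1 \<le> G"
    "\<forall>\<gamma>\<ge>G. 12 \<le> \<gamma> powr (p - 1) \<and> (2 * real m + 1) * window_length p (energy_floor p Ms \<gamma>) < 1 / 2"
    using exists_amplitude_threshold[OF assms(2) Ms(3)] by blast
  define \<delta> where "\<delta> = min (1 / 2) (sqrt (2 / G powr (p - 1)))"
  define \<alpha>0 where "\<alpha>0 = max (alpha_p N p + 1) (2 * (real N - 2) / (Ms - 2))"
  have \<delta>: "0 < \<delta>" "\<delta> < 1"
    unfolding \<delta>_def using G(1) by auto
  have \<alpha>0: "\<alpha>0 > alpha_p N p"
    unfolding \<alpha>0_def by simp
  have "u \<alpha> 1 = 0 \<and> finite (zeros01 (u \<alpha>)) \<and> card (zeros01 (u \<alpha>)) = m \<and>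
      (\<forall>t\<in>zeros01 (henon_rescaled p \<alpha> (u \<alpha>)). \<delta> \<le> t)" if "\<alpha>0 \<le> \<alpha>" for \<alpha>
  proof -
    have "alpha_p N p \<ge> 0"
      unfolding alpha_p_def by simp
    moreover have "\<alpha> > alpha_p N p"
      using that unfolding \<alpha>0_def by auto
    ultimately have \<alpha>: "\<alpha> > alpha_p N p" "\<alpha> > 0"
      by auto
    have u: "radial_henon_sol N p \<alpha> (u \<alpha>)" "num_nodal_sets (u \<alpha>) = m" "u \<alpha> 0 > 0"
      using sol[OF \<alpha>(1)] by auto
    obtain U' U'' where "henon_radial N p \<alpha> (u \<alpha>) U' U''"
      using radial_henon_sol_imp_henon_radial[OF u(1) _ assms(2) \<alpha>(2)] assms(1) by auto
    then interpret henon_radial N p \<alpha> "u \<alpha>" U' U'' .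
    have "henon_dim N \<alpha> \<le> Ms"
      using that Ms(1) \<alpha>(2) unfolding \<alpha>0_def by (intro henon_dim_le) auto
    from henon_rescaled_zeros_ge[OF _ u(3) u(2) this Ms(2) G] assms(1) U_1 show ?thesis
      unfolding \<delta>_def by auto
  qed
  from that[OF \<delta> \<alpha>0 this] show ?thesis .
qed

lemma le_Inf_zeros01:
  assumes "f 1 = 0" "\<forall>t\<in>zeros01 f. \<delta> \<le> t"
  shows "\<delta> \<le> Inf (zeros01 f)"
proof (rule cInf_greatest)
  show "zeros01 f \<noteq> {}"
    using assms(1) unfolding zeros01_def by force
qed (use assms(2) in blast)

lemma powr_tendsto_1_at_top: "0 < \<delta> \<Longrightarrow> ((\<lambda>\<alpha>::real. \<delta> powr (2 / (\<alpha> + 2))) \<longlongrightarrow> 1) at_top"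
proof -
  assume "0 < \<delta>"
  have "((\<lambda>\<alpha>::real. 2 / (\<alpha> + 2)) \<longlongrightarrow> 0) at_top"
    by real_asymp
  then have "((\<lambda>\<alpha>. \<delta> powr (2 / (\<alpha> + 2))) \<longlongrightarrow> \<delta> powr 0) at_top"
    using \<open>0 < \<delta>\<close> by (intro tendsto_powr tendsto_const) auto
  then show ?thesis
    using \<open>0 < \<delta>\<close> by simp
qed

theorem lemma4p1:
  fixes N m :: nat and p :: real and u :: "real \<Rightarrow> real \<Rightarrow> real"
  assumes "N \<ge> 3" and "p > 1"
    and sol: "\<And>\<alpha>. \<alpha> > alpha_p N p \<Longrightarrow>
               radial_henon_sol N p \<alpha> (u \<alpha>) \<and> num_nodal_sets (u \<alpha>) = m \<and> u \<alpha> 0 > 0"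
  defines "v \<equiv> (\<lambda>\<alpha> t. (2 / (\<alpha> + 2)) powr (2 / (p - 1)) * u \<alpha> (t powr (2 / (\<alpha> + 2))))"
  shows "(\<exists>\<delta> \<alpha>0. 0 < \<delta> \<and> \<delta> < 1 \<and> \<alpha>0 > alpha_p N p \<and>
            (\<forall>\<alpha> \<ge> \<alpha>0. \<delta> \<le> Inf (zeros01 (v \<alpha>))))
       \<and> (\<forall>i \<in> {1..m}. ((\<lambda>\<alpha>. ith_zero (u \<alpha>) i) \<longlongrightarrow> 1) at_top)"
proof -
  have v: "v \<alpha> = henon_rescaled p \<alpha> (u \<alpha>)" for \<alpha>
    unfolding v_def henon_rescaled_def[abs_def] ..
  obtain \<delta> \<alpha>0 where \<delta>: "0 < \<delta>" "\<delta> < 1" "\<alpha>0 > alpha_p N p"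
    and zeros: "\<And>\<alpha>. \<alpha>0 \<le> \<alpha> \<Longrightarrow> u \<alpha> 1 = 0 \<and> finite (zeros01 (u \<alpha>)) \<and> card (zeros01 (u \<alpha>)) = m \<and>
      (\<forall>t\<in>zeros01 (v \<alpha>). \<delta> \<le> t)"
    using henon_zeros_uniform[OF assms(1,2) sol, unfolded v[symmetric]] by blast
  have "\<delta> \<le> Inf (zeros01 (v \<alpha>))" if "\<alpha>0 \<le> \<alpha>" for \<alpha>
    using zeros[OF that] by (intro le_Inf_zeros01) (auto simp: v_def)
  moreover have "((\<lambda>\<alpha>. ith_zero (u \<alpha>) i) \<longlongrightarrow> 1) at_top" if "i \<in> {1..m}" for i
  proof (rule ith_zero_tendsto_1[OF _ powr_tendsto_1_at_top[OF \<delta>(1)]])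
    show "\<forall>\<^sub>F \<alpha> in at_top. finite (zeros01 (u \<alpha>)) \<and> i \<le> card (zeros01 (u \<alpha>)) \<and>
        (\<forall>r\<in>zeros01 (u \<alpha>). \<delta> powr (2 / (\<alpha> + 2)) \<le> r)"
      using eventually_ge_at_top[of "max \<alpha>0 0"]
    proof eventually_elim
      case (elim \<alpha>)
      then show ?case
        using zeros[of \<alpha>] that \<delta>(1) zeros01_ge_powr_of_rescaled[of \<alpha> \<delta> p "u \<alpha>"] unfolding v by auto
    qed
  qed (use that in simp)
  ultimately show ?thesis
    using \<delta> by blast
qed

end
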